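(* Let $\mathcal{G}=(V,E)$ be any undirected graph with $|V|=n$, let $d\in V$, and let $\mathcal{P}$ be any local destination-based failover protocol on $\mathcal{G}$. Suppose all-to-one routing towards $d$ is performed. Then, given knowledge of $d$ and $\mathcal{P}$ (but not of the random routing entries), one can construct a set of failed edges $\mathcal{F}\subseteq\{(v,d)~|~v\in V\}$ (edges of $E$ incident to $d$) with $|\mathcal{F}|=O(n/\log n)$ such that, with probability at least $1-n^{-\Omega(1)}$, some node $v\neq d$ has load $\mathcal{L}(v)>\frac{1}{10}\cdot\frac{\log n}{\log\log n}$.
   Context: Local destination-based failover routing: the network is an undirected graph $\mathcal{G}=(V,E)$; $\Gamma(v)$ denotes the set of neighbors of $v$. Given a set $\mathcal{F}\subseteq E$ of failed edges, let $\mathcal{F}_v=\{w~|~(v,w)\in\mathcal{F}\}$. A local destination-based failover protocol $\mathcal{P}$ is a family of probability distributions $\mathcal{D}(v,\mathcal{F}_v,d)$, one for each $v,d\in V$ and $\mathcal{F}_v\subseteq\Gamma(v)$, where $\mathcal{D}(v,\mathcal{F}_v,d)$ is a distribution over $(\Gamma(v)\setminus\mathcal{F}_v)\cup\{v\}$. The failure set $\mathcal{F}$ is fixed first (by an adversary knowing $\mathcal{P}$ and $d$ but not the random choices); then each node $v$ independently draws its routing entry $\alpha(v,\mathcal{F}_v,d)$ from $\mathcal{D}(v,\mathcal{F}_v,d)$, and a packet with destination $d$ at node $v$ is forwarded to $\alpha(v,\mathcal{F}_v,d)$. All-to-one routing towards $d$: every node $v\neq d$ sends one flow towards $d$, which follows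 the forwarding entries. The load $\mathcal{L}(v)$ of a node $v$ is the number of flows that pass through $v$ on their way to $d$ (a flow started at $v$ counts); if some flow enters a forwarding cycle, every node on that cycle has load $\infty$. *)

theory Defs
  imports "HOL-Probability.Probability"
begin

definition undirected_graph :: "nat \<Rightarrow> nat set set \<Rightarrow> bool" where
  "undirected_graph n E \<longleftrightarrow> (\<forall>e\<in>E. \<exists>u w. e = {u, w} \<and> u \<noteq> w \<and> u < n \<and> w < n)"

definition nbrs :: "nat set set \<Rightarrow> nat \<Rightarrow> nat set" where
  "nbrs E v = {w. {v, w} \<in> E}"

definition failed_at :: "nat set set \<Rightarrow> nat \<Rightarrow> nat set" where
  "failed_at F v = {w. {v, w} \<in> F}"

definition failover_protocol :: "nat \<Rightarrow> nat set set \<Rightarrow> (nat \<Rightarrow> nat set \<Rightarrow> nat \<Rightarrow> nat pmf) \<Rightarrow> bool" where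
  "failover_protocol n E D \<longleftrightarrow>
     (\<forall>v<n. \<forall>d<n. \<forall>Fv. Fv \<subseteq> nbrs E v \<longrightarrow> set_pmf (D v Fv d) \<subseteq> (nbrs E v - Fv) \<union> {v})"

text \<open>Joint distribution of the routing entries alpha(v, F_v, d), drawn independently
  for every node v in V = {..<n} (value outside V is irrelevant, fixed to d).\<close>
definition routing_entries :: "nat \<Rightarrow> (nat \<Rightarrow> nat set \<Rightarrow> nat \<Rightarrow> nat pmf) \<Rightarrow> nat set set \<Rightarrow> nat \<Rightarrow> (nat \<Rightarrow> nat) pmf" where
  "routing_entries n D F d = Pi_pmf {..<n} d (\<lambda>v. D v (failed_at F v) d)"

definition flow_visits :: "(nat \<Rightarrow> nat) \<Rightarrow> nat \<Rightarrow> nat \<Rightarrow> nat \<Rightarrow> bool" where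
  "flow_visits \<alpha> d u v \<longleftrightarrow> (\<exists>k. (\<alpha> ^^ k) u = v \<and> (\<forall>j<k. (\<alpha> ^^ j) u \<noteq> d))"

definition on_cycle :: "(nat \<Rightarrow> nat) \<Rightarrow> nat \<Rightarrow> nat \<Rightarrow> bool" where
  "on_cycle \<alpha> d v \<longleftrightarrow> v \<noteq> d \<and> (\<exists>k>0. (\<alpha> ^^ k) v = v \<and> (\<forall>j<k. (\<alpha> ^^ j) v \<noteq> d))"

definition load :: "nat \<Rightarrow> (nat \<Rightarrow> nat) \<Rightarrow> nat \<Rightarrow> nat \<Rightarrow> ereal" where
  "load n \<alpha> d v =
     (if \<exists>u\<in>{..<n} - {d}. flow_visits \<alpha> d u v \<and> on_cycle \<alpha> d v then \<infinity>
      else ereal (real (card {u \<in> {..<n} - {d}. flow_visits \<alpha> d u v})))"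

end

theory Submission
  imports Defs "HOL-Real_Asymp.Real_Asymp"
begin

text \<open>
  The adversary fails the edges to d of a set B of at most n / ln n nodes. Let k be the least
  integer above L = ln n / (10 ln ln n) and let tau be about 1 / (16 k ln n).

  If at least n / ln n nodes are spread, i.e. choose every next hop with probability at most tau,
  B consists of such nodes. Either at least sqrt n targets each expect theta = 1 / (8 ln n) of the
  flows leaving B, and each of them then receives k of these flows with probability about
  (theta / 2)^k / k! = n^(-1/10 - o(1)); or the flows concentrate on few targets and one of them
  expects sqrt n flows. Hit counts of distinct targets are negatively correlated, since a node
  forwards to a single target, so in both cases the second moment method yields a target with
  k flows from B with probability 1 - O(n^(-1/20)).

  Otherwise most nodes are heavy: each has a favourite next hop of probability above tau. The
  functional graph of the favourites contains n^(7/10) disjoint pieces of at most 2k nodes,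
  each closed under it (a forwarding cycle) or funnelling at least k nodes into one exit node.
  A piece is followed with probability at least tau^(2k) = n^(-1/5 - o(1)), independently for
  disjoint pieces, so again some piece is followed with probability 1 - O(n^(-1/20)).
\<close>

section \<open>The second moment method\<close>

lemma count_eq_sum_indicator:
  "finite I \<Longrightarrow> real (card {i\<in>I. x \<in> E i}) = (\<Sum>i\<in>I. indicator (E i) x)"
  by (simp add: indicator_def sum.If_cases Int_def)

lemma integrable_indicator_pmf [simp]: "integrable (measure_pmf M) (indicator A :: 'a \<Rightarrow> real)"
  by (rule measure_pmf.integrable_const_bound[where B = 1]) (auto simp: indicator_def)

lemma integrable_count_power:
  "finite I \<Longrightarrow> integrable (measure_pmf M) (\<lambda>x. real (card {i\<in>I. x \<in> E i}) ^ p)"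
  by (rule measure_pmf.integrable_const_bound[where B = "real (card I) ^ p"])
    (auto intro!: power_mono card_mono)

lemma expectation_count:
  "finite I \<Longrightarrow>
     measure_pmf.expectation M (\<lambda>x. real (card {i\<in>I. x \<in> E i})) = (\<Sum>i\<in>I. measure_pmf.prob M (E i))"
  by (simp add: count_eq_sum_indicator Bochner_Integration.integral_sum)

lemma expectation_count_sq_le:
  fixes M :: "'a pmf" and E :: "'i \<Rightarrow> 'a set" and I :: "'i set"
  defines "\<mu> \<equiv> (\<Sum>i\<in>I. measure_pmf.prob M (E i))"
  assumes "finite I"
    and neg_corr: "\<And>i j. i \<in> I \<Longrightarrow> j \<in> I \<Longrightarrow> i \<noteq> j \<Longrightarrow>
        measure_pmf.prob M (E i \<inter> E j) \<le> measure_pmf.prob M (E i) * measure_pmf.prob M (E j)"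
  shows "measure_pmf.expectation M (\<lambda>x. (real (card {i\<in>I. x \<in> E i}))\<^sup>2) \<le> \<mu> + \<mu>\<^sup>2"
proof -
  let ?P = "measure_pmf.prob M"
  have "(real (card {i\<in>I. x \<in> E i}))\<^sup>2 = (\<Sum>i\<in>I. \<Sum>j\<in>I. indicator (E i \<inter> E j) x)" for x
    unfolding count_eq_sum_indicator[OF \<open>finite I\<close>] power2_eq_square sum_product
    by (intro sum.cong refl) (auto simp: indicator_def)
  hence "measure_pmf.expectation M (\<lambda>x. (real (card {i\<in>I. x \<in> E i}))\<^sup>2)
           = (\<Sum>i\<in>I. \<Sum>j\<in>I. ?P (E i \<inter> E j))"
    by (simp add: Bochner_Integration.integral_sum)
  also have "\<dots> \<le> (\<Sum>i\<in>I. ?P (E i) + (\<Sum>j\<in>I. ?P (E i) * ?P (E j)))"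
  proof (intro sum_mono)
    fix i assume i: "i \<in> I"
    have "(\<Sum>j\<in>I. ?P (E i \<inter> E j)) = ?P (E i) + (\<Sum>j\<in>I-{i}. ?P (E i \<inter> E j))"
      using i \<open>finite I\<close> by (simp add: sum.remove)
    also have "\<dots> \<le> ?P (E i) + (\<Sum>j\<in>I-{i}. ?P (E i) * ?P (E j))"
      using neg_corr i by (intro add_left_mono sum_mono) auto
    also have "\<dots> \<le> ?P (E i) + (\<Sum>j\<in>I. ?P (E i) * ?P (E j))"
      using i \<open>finite I\<close> by (intro add_left_mono sum_mono2) auto
    finally show "(\<Sum>j\<in>I. ?P (E i \<inter> E j)) \<le> \<dots>" .
  qed
  also have "\<dots> = \<mu> + \<mu>\<^sup>2"
    unfolding \<mu>_def sum.distrib power2_eq_square sum_product by simp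
  finally show ?thesis .
qed

lemma prob_count_less_le:
  fixes M :: "'a pmf" and E :: "'i \<Rightarrow> 'a set" and I :: "'i set"
  defines "\<mu> \<equiv> (\<Sum>i\<in>I. measure_pmf.prob M (E i))"
  assumes "finite I"
    and neg_corr: "\<And>i j. i \<in> I \<Longrightarrow> j \<in> I \<Longrightarrow> i \<noteq> j \<Longrightarrow>
        measure_pmf.prob M (E i \<inter> E j) \<le> measure_pmf.prob M (E i) * measure_pmf.prob M (E j)"
    and "t < \<mu>"
  shows "measure_pmf.prob M {x. real (card {i\<in>I. x \<in> E i}) < t} \<le> \<mu> / (\<mu> - t)\<^sup>2"
proof -
  let ?P = "measure_pmf.prob M" and ?E = "measure_pmf.expectation M"
  define Y where "Y = (\<lambda>x. real (card {i\<in>I. x \<in> E i}))"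
  have int: "integrable M Y" "integrable M (\<lambda>x. (Y x)\<^sup>2)"
    using integrable_count_power[OF \<open>finite I\<close>, of M E 1] integrable_count_power[OF \<open>finite I\<close>, of M E 2]
    by (simp_all add: Y_def)
  have E_Y: "?E Y = \<mu>"
    unfolding Y_def \<mu>_def using \<open>finite I\<close> by (rule expectation_count)
  have variance: "?E (\<lambda>x. (Y x - ?E Y)\<^sup>2) \<le> \<mu>"
    using measure_pmf.variance_eq[OF int] E_Y expectation_count_sq_le[where M = M and E = E and I = I, OF \<open>finite I\<close> neg_corr]
    by (simp add: Y_def \<mu>_def)
  have "{x. Y x < t} \<subseteq> {x. \<mu> - t \<le> \<bar>Y x - ?E Y\<bar>}"
    using E_Y by auto
  hence "?P {x. Y x < t} \<le> ?P {x. \<mu> - t \<le> \<bar>Y x - ?E Y\<bar>}"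
    by (intro measure_pmf.finite_measure_mono) auto
  also have "\<dots> \<le> ?E (\<lambda>x. (Y x - ?E Y)\<^sup>2) / (\<mu> - t)\<^sup>2"
    using measure_pmf.Chebyshev_inequality[OF _ int(2), of "\<mu> - t"] \<open>t < \<mu>\<close> by simp
  also have "\<dots> \<le> \<mu> / (\<mu> - t)\<^sup>2"
    using variance by (intro divide_right_mono) auto
  finally show ?thesis
    by (simp add: Y_def)
qed

lemma prob_count_ge_second_moment:
  fixes M :: "'a pmf" and E :: "'i \<Rightarrow> 'a set"
  assumes "finite I"
    and neg_corr: "\<And>i j. i \<in> I \<Longrightarrow> j \<in> I \<Longrightarrow> i \<noteq> j \<Longrightarrow>
        measure_pmf.prob M (E i \<inter> E j) \<le> measure_pmf.prob M (E i) * measure_pmf.prob M (E j)"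
    and "\<mu> \<le> (\<Sum>i\<in>I. measure_pmf.prob M (E i))" "2 * real k \<le> \<mu>" "0 < \<mu>"
  shows "measure_pmf.prob M {x. k \<le> card {i\<in>I. x \<in> E i}} \<ge> 1 - 4 / \<mu>"
proof -
  define \<sigma> where "\<sigma> = (\<Sum>i\<in>I. measure_pmf.prob M (E i))"
  have "measure_pmf.prob M {x. real (card {i\<in>I. x \<in> E i}) < real k} \<le> \<sigma> / (\<sigma> - real k)\<^sup>2"
    unfolding \<sigma>_def using assms by (intro prob_count_less_le) auto
  also have "\<dots> \<le> \<sigma> / (\<sigma> / 2)\<^sup>2"
    using assms by (intro divide_left_mono power_mono) (auto simp: \<sigma>_def)
  also have "\<dots> = 4 / \<sigma>"
    by (simp add: power2_eq_square)
  also have "\<dots> \<le> 4 / \<mu>"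
    using assms by (intro divide_left_mono) (auto simp: \<sigma>_def)
  finally show ?thesis
    using measure_pmf.prob_compl[of "{x. real (card {i\<in>I. x \<in> E i}) < real k}" M]
    by (simp add: Compl_eq_Diff_UNIV[symmetric] Collect_neg_eq[symmetric] not_less)
qed

lemma prob_some_event_second_moment:
  fixes M :: "'a pmf" and E :: "'i \<Rightarrow> 'a set"
  assumes "finite I"
    and "\<And>i j. i \<in> I \<Longrightarrow> j \<in> I \<Longrightarrow> i \<noteq> j \<Longrightarrow>
        measure_pmf.prob M (E i \<inter> E j) \<le> measure_pmf.prob M (E i) * measure_pmf.prob M (E j)"
    and "\<mu> \<le> (\<Sum>i\<in>I. measure_pmf.prob M (E i))" "2 \<le> \<mu>"
  shows "measure_pmf.prob M {x. \<exists>i\<in>I. x \<in> E i} \<ge> 1 - 4 / \<mu>"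
proof -
  have "{x. 1 \<le> card {i\<in>I. x \<in> E i}} \<subseteq> {x. \<exists>i\<in>I. x \<in> E i}"
    using \<open>finite I\<close> by (auto simp: Suc_le_eq card_gt_0_iff)
  hence "measure_pmf.prob M {x. 1 \<le> card {i\<in>I. x \<in> E i}} \<le> measure_pmf.prob M {x. \<exists>i\<in>I. x \<in> E i}"
    by (intro measure_pmf.finite_measure_mono) auto
  moreover have "measure_pmf.prob M {x. 1 \<le> card {i\<in>I. x \<in> E i}} \<ge> 1 - 4 / \<mu>"
    using assms by (intro prob_count_ge_second_moment) auto
  ultimately show ?thesis
    by linarith
qed

lemma error_bound_four_div:
  fixes \<epsilon> \<mu> :: real
  assumes "0 < \<epsilon>" "\<epsilon> \<le> 1" "4 / \<epsilon> \<le> \<mu>"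
  shows "2 \<le> \<mu>" "1 - \<epsilon> \<le> 1 - 4 / \<mu>"
proof -
  have "4 \<le> 4 / \<epsilon>"
    using assms(1,2) by (simp add: le_divide_eq)
  hence "4 \<le> \<mu>"
    using assms(3) by linarith
  thus "2 \<le> \<mu>"
    by simp
  have "4 / \<mu> \<le> 4 / (4 / \<epsilon>)"
    using assms \<open>4 \<le> \<mu>\<close> by (intro divide_left_mono) auto
  thus "1 - \<epsilon> \<le> 1 - 4 / \<mu>"
    using assms(1) by simp
qed

section \<open>Product distributions and hit counts\<close>

lemma measure_Pi_pmf_subset:
  assumes "finite A" "T \<subseteq> A"
    and depends: "\<And>f g. (\<forall>x\<in>T. f x = g x) \<Longrightarrow> f \<in> X \<longleftrightarrow> g \<in> X"
  shows "measure_pmf.prob (Pi_pmf A dflt p) X = measure_pmf.prob (Pi_pmf T dflt p) X"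
proof -
  have "(\<lambda>f x. if x \<in> T then f x else dflt) -` X = X"
    using depends[of "\<lambda>x. if x \<in> T then _ x else dflt"] by auto
  thus ?thesis
    by (simp add: Pi_pmf_subset[OF assms(1,2)])
qed

lemma measure_Pi_pmf_cylinder:
  assumes "finite A" "T \<subseteq> A"
  shows "measure_pmf.prob (Pi_pmf A dflt p) {f. \<forall>x\<in>T. f x \<in> B x}
           = (\<Prod>x\<in>T. measure_pmf.prob (p x) (B x))"
proof -
  have "finite T"
    using assms finite_subset by blast
  have "measure_pmf.prob (Pi_pmf A dflt p) {f. \<forall>x\<in>T. f x \<in> B x}
          = measure_pmf.prob (Pi_pmf T dflt p) (Pi T B)"
    using assms by (subst measure_Pi_pmf_subset[of A T]) (auto simp: Pi_def Ball_def)
  thus ?thesis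
    using measure_Pi_pmf_Pi[OF \<open>finite T\<close>] by simp
qed

lemma measure_pair_pmf_Times:
  "measure_pmf.prob (pair_pmf M N) (A \<times> B) = measure_pmf.prob M A * measure_pmf.prob N B"
proof -
  have "measure_pmf.prob (pair_pmf M N) (A \<times> B)
          = measure_pmf.prob (pair_pmf M N) ((A \<inter> set_pmf M) \<times> (B \<inter> set_pmf N))"
    using measure_Int_set_pmf[of "pair_pmf M N" "A \<times> B"] by (simp add: Times_Int_Times)
  also have "\<dots> = measure_pmf.prob M (A \<inter> set_pmf M) * measure_pmf.prob N (B \<inter> set_pmf N)"
    by (rule measure_pmf_prob_product) auto
  finally show ?thesis
    by (simp add: measure_Int_set_pmf)
qed

lemma measure_Pi_pmf_insert:
  assumes "finite T" "b \<notin> T"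
  shows "measure_pmf.prob (Pi_pmf (insert b T) dflt p) X
           = measure_pmf.prob (pair_pmf (p b) (Pi_pmf T dflt p)) {(y, f). f(b := y) \<in> X}"
  by (simp add: Pi_pmf_insert[OF assms] vimage_def case_prod_unfold)

definition hits :: "'a set \<Rightarrow> 'b \<Rightarrow> ('a \<Rightarrow> 'b) \<Rightarrow> nat" where
  "hits A w f = card {a\<in>A. f a = w}"

lemma hits_insert_upd:
  assumes "finite T" "b \<notin> T"
  shows "hits (insert b T) w (f(b := y)) = (if y = w then Suc (hits T w f) else hits T w f)"
proof -
  have "{a\<in>insert b T. (f(b := y)) a = w}
          = (if y = w then insert b {a\<in>T. f a = w} else {a\<in>T. f a = w})"
    using assms by auto
  thus ?thesis
    using assms by (simp add: hits_def)
qed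

lemma hits_cong: "(\<And>a. a \<in> A \<Longrightarrow> f a = g a) \<Longrightarrow> hits A w f = hits A w g"
  unfolding hits_def by (metis (mono_tags, lifting))

lemma prob_hits_insert:
  assumes "finite T" "b \<notin> T"
  shows "measure_pmf.prob (Pi_pmf (insert b T) dflt p) {f. k \<le> hits (insert b T) w f}
      = pmf (p b) w * measure_pmf.prob (Pi_pmf T dflt p) {f. k - 1 \<le> hits T w f}
      + (1 - pmf (p b) w) * measure_pmf.prob (Pi_pmf T dflt p) {f. k \<le> hits T w f}"
proof -
  let ?M = "pair_pmf (p b) (Pi_pmf T dflt p)" and ?Q = "Pi_pmf T dflt p"
  define S1 where "S1 = {w} \<times> {f. k - 1 \<le> hits T w f}"
  define S2 where "S2 = (- {w}) \<times> {f. k \<le> hits T w f}"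
  have "{(y, f). f(b := y) \<in> {f. k \<le> hits (insert b T) w f}} = S1 \<union> S2"
    using assms by (auto simp: S1_def S2_def hits_insert_upd)
  moreover have "measure_pmf.prob ?M (S1 \<union> S2) = measure_pmf.prob ?M S1 + measure_pmf.prob ?M S2"
    by (rule measure_pmf.finite_measure_Union) (auto simp: S1_def S2_def)
  moreover have "measure_pmf.prob (p b) (- {w}) = 1 - pmf (p b) w"
    using measure_pmf.prob_compl[of "{w}" "p b"] by (simp add: Compl_eq_Diff_UNIV measure_pmf_single)
  ultimately show ?thesis
    by (simp add: measure_Pi_pmf_insert[OF assms] S1_def S2_def measure_pair_pmf_Times
        measure_pmf_single)
qed

lemma prob_hits_pair_insert:
  assumes "finite T" "b \<notin> T" "w \<noteq> w'"
  shows "measure_pmf.prob (Pi_pmf (insert b T) dflt p)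
           {f. \<Phi> (hits (insert b T) w f) (hits (insert b T) w' f)}
      = pmf (p b) w * measure_pmf.prob (Pi_pmf T dflt p) {f. \<Phi> (Suc (hits T w f)) (hits T w' f)}
      + pmf (p b) w' * measure_pmf.prob (Pi_pmf T dflt p) {f. \<Phi> (hits T w f) (Suc (hits T w' f))}
      + (1 - pmf (p b) w - pmf (p b) w')
          * measure_pmf.prob (Pi_pmf T dflt p) {f. \<Phi> (hits T w f) (hits T w' f)}"
proof -
  let ?M = "pair_pmf (p b) (Pi_pmf T dflt p)"
  define S1 where "S1 = {w} \<times> {f. \<Phi> (Suc (hits T w f)) (hits T w' f)}"
  define S2 where "S2 = {w'} \<times> {f. \<Phi> (hits T w f) (Suc (hits T w' f))}"
  define S3 where "S3 = (- {w, w'}) \<times> {f. \<Phi> (hits T w f) (hits T w' f)}"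
  have "{(y, f). f(b := y) \<in> {f. \<Phi> (hits (insert b T) w f) (hits (insert b T) w' f)}}
          = S1 \<union> S2 \<union> S3"
    using assms by (auto simp: S1_def S2_def S3_def hits_insert_upd)
  moreover have "measure_pmf.prob ?M (S1 \<union> S2 \<union> S3)
                   = measure_pmf.prob ?M S1 + measure_pmf.prob ?M S2 + measure_pmf.prob ?M S3"
    using assms(3) by (subst measure_pmf.finite_measure_Union, auto simp: S1_def S2_def S3_def)+
  moreover have "measure_pmf.prob (p b) (- {w, w'}) = 1 - pmf (p b) w - pmf (p b) w'"
    using measure_pmf.prob_compl[of "{w, w'}" "p b"] assms(3)
    by (simp add: Compl_eq_Diff_UNIV measure_pmf_conv_infsetsum)
  ultimately show ?thesis
    by (simp add: measure_Pi_pmf_insert[OF assms(1,2)] S1_def S2_def S3_def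
        measure_pair_pmf_Times measure_pmf_single)
qed

lemma prob_hits_neg_corr:
  assumes "finite T" "w \<noteq> w'"
  shows "measure_pmf.prob (Pi_pmf T dflt p) {f. k \<le> hits T w f \<and> k' \<le> hits T w' f}
     \<le> measure_pmf.prob (Pi_pmf T dflt p) {f. k \<le> hits T w f}
       * measure_pmf.prob (Pi_pmf T dflt p) {f. k' \<le> hits T w' f}"
  using assms(1)
proof (induction T arbitrary: k k' rule: finite_induct)
  case empty
  show ?case
    by (simp add: indicator_def)
next
  case (insert b T)
  let ?Q = "Pi_pmf T dflt p"
  define x where "x = pmf (p b) w"
  define y where "y = pmf (p b) w'"
  define A where "A k = measure_pmf.prob ?Q {f. k \<le> hits T w f}" for k
  define B where "B k = measure_pmf.prob ?Q {f. k \<le> hits T w' f}" for k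
  define J where "J k k' = measure_pmf.prob ?Q {f. k \<le> hits T w f \<and> k' \<le> hits T w' f}" for k k'
  have "{f. k \<le> Suc (hits T w f) \<and> k' \<le> hits T w' f} = {f. k - 1 \<le> hits T w f \<and> k' \<le> hits T w' f}"
    "{f. k \<le> hits T w f \<and> k' \<le> Suc (hits T w' f)} = {f. k \<le> hits T w f \<and> k' - 1 \<le> hits T w' f}"
    by auto
  hence "measure_pmf.prob (Pi_pmf (insert b T) dflt p)
           {f. k \<le> hits (insert b T) w f \<and> k' \<le> hits (insert b T) w' f}
       = x * J (k - 1) k' + y * J k (k' - 1) + (1 - x - y) * J k k'"
    using prob_hits_pair_insert[OF insert(1,2) assms(2), of dflt p "\<lambda>a c. k \<le> a \<and> k' \<le> c"]
    by (simp add: x_def y_def J_def)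
  also have "\<dots> \<le> x * (A (k - 1) * B k') + y * (A k * B (k' - 1)) + (1 - x - y) * (A k * B k')"
  proof -
    have "x + y \<le> 1"
      using measure_pmf.prob_le_1[of "p b" "{w, w'}"] assms(2)
      by (simp add: x_def y_def measure_pmf_conv_infsetsum)
    thus ?thesis
      unfolding J_def A_def B_def x_def y_def
      by (intro add_mono mult_left_mono insert.IH) auto
  qed
  also have "\<dots> \<le> (x * A (k - 1) + (1 - x) * A k) * (y * B (k' - 1) + (1 - y) * B k')"
  proof -
    have "A k \<le> A (k - 1)" "B k' \<le> B (k' - 1)"
      unfolding A_def B_def by (intro measure_pmf.finite_measure_mono; auto)+
    hence "0 \<le> x * y * ((A (k - 1) - A k) * (B (k' - 1) - B k'))"
      by (simp add: x_def y_def)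
    thus ?thesis
      by (simp add: algebra_simps)
  qed
  also have "\<dots> = measure_pmf.prob (Pi_pmf (insert b T) dflt p) {f. k \<le> hits (insert b T) w f}
      * measure_pmf.prob (Pi_pmf (insert b T) dflt p) {f. k' \<le> hits (insert b T) w' f}"
    by (simp add: prob_hits_insert[OF insert(1,2)] x_def y_def A_def B_def)
  finally show ?case .
qed

lemma power_Suc_diff_le:
  fixes u v :: real
  assumes "0 \<le> u" "u \<le> v"
  shows "v ^ Suc j - u ^ Suc j \<le> real (Suc j) * (v - u) * v ^ j"
proof (induction j)
  case (Suc j)
  have "v ^ Suc (Suc j) - u ^ Suc (Suc j) = v * (v ^ Suc j - u ^ Suc j) + u ^ Suc j * (v - u)"
    by (simp add: algebra_simps)
  also have "\<dots> \<le> v * (real (Suc j) * (v - u) * v ^ j) + v ^ Suc j * (v - u)"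
    using assms Suc by (intro add_mono mult_left_mono mult_right_mono power_mono) auto
  also have "\<dots> = real (Suc (Suc j)) * (v - u) * v ^ Suc j"
    by (simp add: algebra_simps)
  finally show ?case .
qed simp

lemma hits_lower_bound_step:
  fixes x s \<tau> A A' :: real
  assumes "0 \<le> x" "x \<le> \<tau>" "0 \<le> s" "x + s \<le> 1"
    and A: "(max 0 (s - real j * \<tau>)) ^ j / fact j * (1 - s) \<le> A"
    and A': "(max 0 (s - real (Suc j) * \<tau>)) ^ Suc j / fact (Suc j) * (1 - s) \<le> A'"
  shows "(max 0 (x + s - real (Suc j) * \<tau>)) ^ Suc j / fact (Suc j) * (1 - (x + s))
           \<le> x * A + (1 - x) * A'"
proof -
  define u where "u = max 0 (s - real (Suc j) * \<tau>)"
  define u' where "u' = max 0 (x + s - real (Suc j) * \<tau>)"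
  define v where "v = max 0 (s - real j * \<tau>)"
  have u: "0 \<le> u" "u \<le> u'" "u' - u \<le> x" and "u' \<le> v" "0 \<le> v"
    using assms(1,2) by (auto simp: u_def u'_def v_def algebra_simps)
  have "u' ^ Suc j - u ^ Suc j \<le> real (Suc j) * (u' - u) * u' ^ j"
    using u(1,2) by (rule power_Suc_diff_le)
  also have "\<dots> \<le> real (Suc j) * x * u' ^ j"
    using u by (intro mult_left_mono mult_right_mono) auto
  finally have "u' ^ Suc j * (1 - (x + s)) \<le> (u ^ Suc j + real (Suc j) * x * u' ^ j) * (1 - (x + s))"
    using assms(4) by (intro mult_right_mono) auto
  also have "\<dots> = u ^ Suc j * (1 - (x + s)) + real (Suc j) * x * u' ^ j * (1 - (x + s))"
    by (rule distrib_right)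
  also have "\<dots> \<le> (1 - x) * u ^ Suc j * (1 - s) + real (Suc j) * x * v ^ j * (1 - s)"
  proof (rule add_mono)
    have "(1 - x) * u ^ Suc j * (1 - s) - u ^ Suc j * (1 - (x + s)) = x * s * u ^ Suc j"
      by (simp add: algebra_simps)
    moreover have "0 \<le> x * s * u ^ Suc j"
      using assms u by simp
    ultimately show "u ^ Suc j * (1 - (x + s)) \<le> (1 - x) * u ^ Suc j * (1 - s)"
      by linarith
    have "u' ^ j \<le> v ^ j"
      using u \<open>u' \<le> v\<close> by (intro power_mono) auto
    thus "real (Suc j) * x * u' ^ j * (1 - (x + s)) \<le> real (Suc j) * x * v ^ j * (1 - s)"
      using assms u \<open>0 \<le> v\<close> by (intro mult_mono) auto
  qed
  finally have "u' ^ Suc j * (1 - (x + s)) / fact (Suc j)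
      \<le> ((1 - x) * u ^ Suc j * (1 - s) + real (Suc j) * x * v ^ j * (1 - s)) / fact (Suc j)"
    by (intro divide_right_mono) auto
  also have "\<dots> = (1 - x) * (u ^ Suc j / fact (Suc j) * (1 - s)) + x * (v ^ j / fact j * (1 - s))"
    by (simp add: add_divide_distrib del: of_nat_Suc)
  also have "\<dots> \<le> (1 - x) * A' + x * A"
    using A A' assms by (intro add_mono mult_left_mono) (auto simp: u_def v_def)
  finally show ?thesis
    by (simp add: u'_def)
qed

lemma prob_hits_ge_lower_bound:
  assumes "finite T" "0 \<le> \<tau>" "\<And>a. a \<in> T \<Longrightarrow> pmf (p a) w \<le> \<tau>"
  shows "(max 0 ((\<Sum>a\<in>T. pmf (p a) w) - real k * \<tau>)) ^ k / fact k * (1 - (\<Sum>a\<in>T. pmf (p a) w))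
           \<le> measure_pmf.prob (Pi_pmf T dflt p) {f. k \<le> hits T w f}"
  using assms(1,3)
proof (induction T arbitrary: k rule: finite_induct)
  case empty
  show ?case
    using \<open>0 \<le> \<tau>\<close> by (cases k) (auto simp: indicator_def)
next
  case (insert b T)
  let ?Q = "Pi_pmf T dflt p"
  define x where "x = pmf (p b) w"
  define s where "s = (\<Sum>a\<in>T. pmf (p a) w)"
  have x: "0 \<le> x" "x \<le> \<tau>" "x \<le> 1"
    using insert.prems by (auto simp: x_def pmf_le_1)
  have "0 \<le> s"
    by (simp add: s_def sum_nonneg)
  have IH: "(max 0 (s - real j * \<tau>)) ^ j / fact j * (1 - s) \<le> measure_pmf.prob ?Q {f. j \<le> hits T w f}"
    for j
    unfolding s_def using insert by auto
  have "(max 0 (x + s - real k * \<tau>)) ^ k / fact k * (1 - (x + s))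
     \<le> x * measure_pmf.prob ?Q {f. k - 1 \<le> hits T w f} + (1 - x) * measure_pmf.prob ?Q {f. k \<le> hits T w f}"
  proof (cases "x + s \<le> 1")
    case False
    have "(max 0 (x + s - real k * \<tau>)) ^ k / fact k * (1 - (x + s)) \<le> 0"
      using False by (intro mult_nonneg_nonpos) auto
    also have "0 \<le> x * measure_pmf.prob ?Q {f. k - 1 \<le> hits T w f}
                    + (1 - x) * measure_pmf.prob ?Q {f. k \<le> hits T w f}"
      using False \<open>0 \<le> s\<close> x by (intro add_nonneg_nonneg mult_nonneg_nonneg) auto
    finally show ?thesis .
  next
    case True
    show ?thesis
    proof (cases k)
      case 0
      thus ?thesis
        using True x \<open>0 \<le> s\<close> by simp
    next
      case (Suc j)
      thus ?thesis
        using hits_lower_bound_step[OF x(1,2) \<open>0 \<le> s\<close> True IH[of j] IH[of "Suc j"]] by simp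
    qed
  qed
  thus ?case
    using insert.hyps by (simp add: prob_hits_insert x_def s_def)
qed

lemma prob_hits_mono:
  assumes "finite A" "T \<subseteq> A"
  shows "measure_pmf.prob (Pi_pmf T dflt p) {f. k \<le> hits T w f}
           \<le> measure_pmf.prob (Pi_pmf A dflt p) {f. k \<le> hits A w f}"
proof -
  have "measure_pmf.prob (Pi_pmf T dflt p) {f. k \<le> hits T w f}
          = measure_pmf.prob (Pi_pmf A dflt p) {f. k \<le> hits T w f}"
    using assms by (intro measure_Pi_pmf_subset[symmetric]) (auto cong: hits_cong)
  also have "\<dots> \<le> measure_pmf.prob (Pi_pmf A dflt p) {f. k \<le> hits A w f}"
  proof (intro measure_pmf.finite_measure_mono subsetI)
    fix f assume "f \<in> {f. k \<le> hits T w f}"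
    moreover have "hits T w f \<le> hits A w f"
      unfolding hits_def using assms by (intro card_mono) auto
    ultimately show "f \<in> {f. k \<le> hits A w f}"
      by simp
  qed simp
  finally show ?thesis .
qed

lemma subset_sum_between:
  fixes x :: "'a \<Rightarrow> real"
  assumes "finite P" "\<And>a. a \<in> P \<Longrightarrow> 0 \<le> x a \<and> x a \<le> \<tau>" "0 \<le> \<tau>" "0 \<le> \<theta>" "\<theta> \<le> (\<Sum>a\<in>P. x a)"
  shows "\<exists>T\<subseteq>P. \<theta> - \<tau> \<le> (\<Sum>a\<in>T. x a) \<and> (\<Sum>a\<in>T. x a) \<le> \<theta>"
  using assms(1,2,5)
proof (induction P rule: finite_induct)
  case empty
  thus ?case
    using assms(3,4) by auto
next
  case (insert b P)
  show ?case
  proof (cases "\<theta> \<le> (\<Sum>a\<in>P. x a)")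
    case True
    with insert obtain T where "T \<subseteq> P" "\<theta> - \<tau> \<le> (\<Sum>a\<in>T. x a) \<and> (\<Sum>a\<in>T. x a) \<le> \<theta>"
      by auto
    thus ?thesis
      by (intro exI[of _ T]) auto
  next
    case False
    have "x b \<le> \<tau>"
      using insert.prems(1) by simp
    hence "\<theta> - \<tau> \<le> (\<Sum>a\<in>P. x a)"
      using insert.prems(2) insert.hyps by simp
    thus ?thesis
      using False by (intro exI[of _ P]) auto
  qed
qed

lemma prob_hits_ge_second_moment:
  fixes p :: "'a \<Rightarrow> 'b pmf"
  assumes "finite P" "\<mu> \<le> (\<Sum>a\<in>P. pmf (p a) w)" "2 * real k \<le> \<mu>" "0 < \<mu>"
  shows "measure_pmf.prob (Pi_pmf P dflt p) {f. k \<le> hits P w f} \<ge> 1 - 4 / \<mu>"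
proof -
  let ?M = "Pi_pmf P dflt p"
  define E where "E a = {f :: 'a \<Rightarrow> 'b. f a = w}" for a
  have prob_E: "measure_pmf.prob ?M (E a \<inter> E b) = pmf (p a) w * pmf (p b) w"
    if "a \<in> P" "b \<in> P" "a \<noteq> b" for a b
  proof -
    have "E a \<inter> E b = {f. \<forall>x\<in>{a, b}. f x \<in> {w}}"
      by (auto simp: E_def)
    thus ?thesis
      using that measure_Pi_pmf_cylinder[OF \<open>finite P\<close>, of "{a, b}" dflt p "\<lambda>_. {w}"]
      by (simp add: measure_pmf_single)
  qed
  have "measure_pmf.prob ?M (E a) = pmf (p a) w" if "a \<in> P" for a
    using that measure_Pi_pmf_cylinder[OF \<open>finite P\<close>, of "{a}" dflt p "\<lambda>_. {w}"]
    by (simp add: E_def measure_pmf_single)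
  hence "measure_pmf.prob ?M {f. k \<le> card {a\<in>P. f \<in> E a}} \<ge> 1 - 4 / \<mu>"
    using assms prob_E by (intro prob_count_ge_second_moment) auto
  thus ?thesis
    by (simp add: E_def hits_def)
qed

lemma prob_some_hits_ge_second_moment:
  fixes p :: "'a \<Rightarrow> 'b pmf"
  assumes "finite P" "finite G" "0 \<le> \<tau>"
    and spread: "\<And>a w. a \<in> P \<Longrightarrow> pmf (p a) w \<le> \<tau>"
    and "real (k + 1) * \<tau> \<le> \<theta>" "\<theta> \<le> 1"
    and targets: "\<And>w. w \<in> G \<Longrightarrow> \<theta> \<le> (\<Sum>a\<in>P. pmf (p a) w)"
    and "\<mu> = real (card G) * ((\<theta> - real (k + 1) * \<tau>) ^ k / fact k * (1 - \<theta>))" "2 \<le> \<mu>"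
  shows "measure_pmf.prob (Pi_pmf P dflt p) {f. \<exists>w\<in>G. k \<le> hits P w f} \<ge> 1 - 4 / \<mu>"
proof -
  let ?M = "Pi_pmf P dflt p"
  define E where "E w = {f :: 'a \<Rightarrow> 'b. k \<le> hits P w f}" for w
  have "(\<theta> - real (k + 1) * \<tau>) ^ k / fact k * (1 - \<theta>) \<le> measure_pmf.prob ?M (E w)"
    if "w \<in> G" for w
  proof -
    have "0 \<le> \<theta>"
      using assms(3,5) by (metis mult_nonneg_nonneg of_nat_0_le_iff order_trans)
    \<comment> \<open>Trimming P keeps the factor 1 - s of the lower bound above 1 - \<theta>.\<close>
    hence "\<exists>T\<subseteq>P. \<theta> - \<tau> \<le> (\<Sum>a\<in>T. pmf (p a) w) \<and> (\<Sum>a\<in>T. pmf (p a) w) \<le> \<theta>"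
      using spread targets[OF that] assms(3) by (intro subset_sum_between \<open>finite P\<close>) auto
    then obtain T where T: "T \<subseteq> P" "\<theta> - \<tau> \<le> (\<Sum>a\<in>T. pmf (p a) w)" "(\<Sum>a\<in>T. pmf (p a) w) \<le> \<theta>"
      by blast
    define s where "s = (\<Sum>a\<in>T. pmf (p a) w)"
    have "finite T"
      using T(1) \<open>finite P\<close> finite_subset by blast
    have "\<theta> - real (k + 1) * \<tau> \<le> max 0 (s - real k * \<tau>)"
      using T by (auto simp: s_def algebra_simps)
    hence "(\<theta> - real (k + 1) * \<tau>) ^ k / fact k * (1 - \<theta>) \<le> (max 0 (s - real k * \<tau>)) ^ k / fact k * (1 - s)"
      using assms(5,6) T(3) by (intro mult_mono divide_right_mono power_mono) (auto simp: s_def)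
    also have "\<dots> \<le> measure_pmf.prob (Pi_pmf T dflt p) {f. k \<le> hits T w f}"
      unfolding s_def using spread T(1) assms(3) by (intro prob_hits_ge_lower_bound \<open>finite T\<close>) auto
    also have "\<dots> \<le> measure_pmf.prob ?M (E w)"
      unfolding E_def by (rule prob_hits_mono[OF \<open>finite P\<close> T(1)])
    finally show ?thesis .
  qed
  hence "\<mu> \<le> (\<Sum>w\<in>G. measure_pmf.prob ?M (E w))"
    using assms(8) sum_mono[of G "\<lambda>_. (\<theta> - real (k + 1) * \<tau>) ^ k / fact k * (1 - \<theta>)"] by auto
  moreover have "measure_pmf.prob ?M (E w \<inter> E w') \<le> measure_pmf.prob ?M (E w) * measure_pmf.prob ?M (E w')"
    if "w \<noteq> w'" for w w'
    using prob_hits_neg_corr[OF \<open>finite P\<close> that, of dflt p k k] by (simp add: E_def Int_def)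
  ultimately have "measure_pmf.prob ?M {f. \<exists>w\<in>G. f \<in> E w} \<ge> 1 - 4 / \<mu>"
    using assms(2,9) by (intro prob_some_event_second_moment) auto
  thus ?thesis
    by (simp add: E_def)
qed

lemma prob_good_piece_realized_ge:
  fixes r :: "'a \<Rightarrow> 'b pmf"
  assumes "finite H" "\<And>v. v \<in> H \<Longrightarrow> \<tau> \<le> pmf (r v) (h v)" "0 \<le> \<tau>" "\<tau> \<le> 1"
    and "\<T> \<subseteq> Pow H" "disjoint \<T>" "\<And>T. T \<in> \<T> \<Longrightarrow> card T \<le> s"
    and "\<mu> \<le> real (card \<T>) * \<tau> ^ s" "2 \<le> \<mu>"
  shows "measure_pmf.prob (Pi_pmf (\<Union>\<T>) dflt r) {\<alpha>. \<exists>T\<in>\<T>. \<forall>v\<in>T. \<alpha> v = h v} \<ge> 1 - 4 / \<mu>"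
proof -
  let ?M = "Pi_pmf (\<Union>\<T>) dflt r"
  define E where "E T = {\<alpha> :: 'a \<Rightarrow> 'b. \<forall>v\<in>T. \<alpha> v \<in> {h v}}" for T
  have "finite (\<Union>\<T>)" "finite \<T>"
    using assms(1,5) by (auto intro: finite_subset)
  have prob_E: "measure_pmf.prob ?M (E T) = (\<Prod>v\<in>T. pmf (r v) (h v))" if "T \<subseteq> \<Union>\<T>" for T
    using measure_Pi_pmf_cylinder[OF \<open>finite (\<Union>\<T>)\<close> that, of dflt r "\<lambda>v. {h v}"]
    by (simp add: E_def measure_pmf_single)
  have "\<tau> ^ s \<le> measure_pmf.prob ?M (E T)" if "T \<in> \<T>" for T
  proof -
    have "\<tau> ^ s \<le> \<tau> ^ card T"
      using assms(3,4,7) that by (intro power_decreasing) auto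
    also have "\<dots> \<le> (\<Prod>v\<in>T. pmf (r v) (h v))"
      using prod_mono[of T "\<lambda>_. \<tau>" "\<lambda>v. pmf (r v) (h v)"] assms(2,3,5) that by auto
    also have "\<dots> = measure_pmf.prob ?M (E T)"
      using that by (intro prob_E[symmetric]) blast
    finally show ?thesis .
  qed
  hence "(\<Sum>T\<in>\<T>. \<tau> ^ s) \<le> (\<Sum>T\<in>\<T>. measure_pmf.prob ?M (E T))"
    by (rule sum_mono)
  hence "\<mu> \<le> (\<Sum>T\<in>\<T>. measure_pmf.prob ?M (E T))"
    using assms(8) by simp
  moreover have "measure_pmf.prob ?M (E T \<inter> E T') = measure_pmf.prob ?M (E T) * measure_pmf.prob ?M (E T')"
    if "T \<in> \<T>" "T' \<in> \<T>" "T \<noteq> T'" for T T'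
  proof -
    have "T \<inter> T' = {}" "finite T" "finite T'"
      using assms(6) that \<open>finite (\<Union>\<T>)\<close> by (auto simp: pairwise_def disjnt_def intro: finite_subset)
    moreover have "E T \<inter> E T' = E (T \<union> T')"
      by (auto simp: E_def)
    ultimately show ?thesis
      using that by (simp add: prob_E Sup_upper prod.union_disjoint)
  qed
  ultimately have "measure_pmf.prob ?M {\<alpha>. \<exists>T\<in>\<T>. \<alpha> \<in> E T} \<ge> 1 - 4 / \<mu>"
    using \<open>finite \<T>\<close> assms(9) by (intro prob_some_event_second_moment) auto
  thus ?thesis
    by (simp add: E_def)
qed

section \<open>Pieces of a functional graph\<close>

definition reaches_within :: "('a \<Rightarrow> 'a) \<Rightarrow> 'a set \<Rightarrow> 'a \<Rightarrow> 'a \<Rightarrow> bool" where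
  "reaches_within h H y x \<longleftrightarrow> (\<exists>j. (h ^^ j) y = x \<and> (\<forall>i<j. (h ^^ i) y \<in> H))"

lemma reaches_within_refl [simp]: "reaches_within h H x x"
  unfolding reaches_within_def by (intro exI[of _ 0]) auto

lemma reaches_within_step:
  assumes "y \<in> H" "reaches_within h H (h y) x"
  shows "reaches_within h H y x"
proof -
  obtain j where j: "(h ^^ j) (h y) = x" "\<forall>i<j. (h ^^ i) (h y) \<in> H"
    using assms(2) by (auto simp: reaches_within_def)
  have "(h ^^ i) y \<in> H" if "i < Suc j" for i
    using that j(2) assms(1) by (cases i) (auto simp: funpow_swap1)
  thus ?thesis
    using j(1) unfolding reaches_within_def by (intro exI[of _ "Suc j"]) (auto simp: funpow_swap1)
qed

lemma reaches_within_stepD: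
  assumes "reaches_within h H y x" "y \<noteq> x"
  shows "y \<in> H" "reaches_within h H (h y) x"
proof -
  obtain j where j: "(h ^^ j) y = x" "\<forall>i<j. (h ^^ i) y \<in> H"
    using assms(1) by (auto simp: reaches_within_def)
  then obtain i where "j = Suc i"
    using assms(2) by (cases j) auto
  thus "y \<in> H" "reaches_within h H (h y) x"
    using j unfolding reaches_within_def by (auto simp: funpow_swap1 intro!: exI[of _ i])
qed

lemma reaches_within_induct [consumes 1, case_names refl step]:
  assumes "reaches_within h H y x"
    and "P x"
    and "\<And>y. y \<in> H \<Longrightarrow> reaches_within h H (h y) x \<Longrightarrow> P (h y) \<Longrightarrow> P y"
  shows "P y"
proof -
  obtain j where "(h ^^ j) y = x" "\<forall>i<j. (h ^^ i) y \<in> H"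
    using assms(1) by (auto simp: reaches_within_def)
  thus ?thesis
  proof (induction j arbitrary: y)
    case (Suc j)
    have "reaches_within h H (h y) x"
      using Suc.prems unfolding reaches_within_def by (auto simp: funpow_swap1 intro!: exI[of _ j])
    moreover have "P (h y)"
      using Suc.prems by (intro Suc.IH) (auto simp: funpow_swap1)
    ultimately show ?case
      using Suc.prems(2) assms(3) by auto
  qed (use assms(2) in simp)
qed

lemma reaches_within_trans:
  assumes "reaches_within h H y z" "reaches_within h H z x"
  shows "reaches_within h H y x"
  using assms(1)
proof (induction rule: reaches_within_induct)
  case (step y)
  show ?case
    using step.hyps(1) step.IH by (rule reaches_within_step)
qed (rule assms(2))

lemma reaches_within_mono:
  assumes "reaches_within h H y x" "H \<subseteq> H'"
  shows "reaches_within h H' y x"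
  using assms(1)
proof (induction rule: reaches_within_induct)
  case (step y)
  thus ?case
    using assms(2) by (intro reaches_within_step[of y H']) auto
qed simp

lemma reaches_within_last_step:
  assumes "reaches_within h H y x" "y \<noteq> x"
  shows "\<exists>c\<in>H. h c = x \<and> reaches_within h H y c"
  using assms
proof (induction rule: reaches_within_induct)
  case (step y)
  show ?case
  proof (cases "h y = x")
    case True
    thus ?thesis
      using step.hyps(1) by auto
  next
    case False
    then obtain c where "c \<in> H" "h c = x" "reaches_within h H (h y) c"
      using step.IH by blast
    thus ?thesis
      using reaches_within_step[OF step.hyps(1)] by blast
  qed
qed simp

definition orbits_leave :: "('a \<Rightarrow> 'a) \<Rightarrow> 'a set \<Rightarrow> bool" where
  "orbits_leave h H \<longleftrightarrow> (\<forall>y\<in>H. \<exists>i. (h ^^ i) y \<notin> H)"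

lemma orbits_leave_subset: "orbits_leave h H \<Longrightarrow> H' \<subseteq> H \<Longrightarrow> orbits_leave h H'"
  unfolding orbits_leave_def by blast

lemma orbits_leave_reaches_exit:
  assumes "orbits_leave h H" "y \<in> H"
  shows "\<exists>e\<in>h ` H - H. reaches_within h H y e"
proof -
  obtain i where "(h ^^ i) y \<notin> H"
    using assms unfolding orbits_leave_def by blast
  define j where "j = (LEAST i. (h ^^ i) y \<notin> H)"
  have j: "(h ^^ j) y \<notin> H" "\<forall>i<j. (h ^^ i) y \<in> H"
    unfolding j_def using LeastI[of "\<lambda>i. (h ^^ i) y \<notin> H", OF \<open>(h ^^ i) y \<notin> H\<close>] not_less_Least
    by blast+
  hence "reaches_within h H y ((h ^^ j) y)"
    unfolding reaches_within_def by blast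
  moreover obtain i where "j = Suc i"
    using j assms(2) by (cases j) auto
  ultimately show ?thesis
    using j by (intro bexI[of _ "(h ^^ j) y"]) auto
qed


lemma cycle_iterates:
  assumes "z \<in> H" "reaches_within h H (h z) z"
  shows "(h ^^ i) z \<in> H \<and> reaches_within h H z ((h ^^ i) z) \<and> reaches_within h H ((h ^^ i) z) z"
proof (induction i)
  case 0
  show ?case
    using assms(1) by simp
next
  case (Suc i)
  define w where "w = (h ^^ i) z"
  have "w \<in> H"
    using Suc by (simp add: w_def)
  hence "reaches_within h H w (h w)"
    by (rule reaches_within_step) simp
  hence "reaches_within h H z (h w)"
    using Suc reaches_within_trans[of h H z w "h w"] by (simp add: w_def)
  moreover have "reaches_within h H (h w) z"
    using Suc assms(2) reaches_within_stepD(2)[of h H w z] by (cases "w = z") (auto simp: w_def)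
  moreover have "h w \<in> H"
    using \<open>reaches_within h H (h w) z\<close> assms(1) reaches_within_stepD(1)[of h H "h w" z]
    by (cases "h w = z") auto
  ultimately show ?case
    by (simp add: w_def)
qed

lemma cycle_reaches_back:
  assumes "z \<in> H" "reaches_within h H (h z) z" "reaches_within h H z y"
  shows "y \<in> H" "reaches_within h H y z"
proof -
  obtain j where "(h ^^ j) z = y"
    using assms(3) by (auto simp: reaches_within_def)
  thus "y \<in> H" "reaches_within h H y z"
    using cycle_iterates[OF assms(1,2), of j] by auto
qed

lemma orbits_leave_no_cycle:
  assumes "orbits_leave h H" "z \<in> H"
  shows "\<not> reaches_within h H (h z) z"
proof
  assume "reaches_within h H (h z) z"
  hence "(h ^^ i) z \<in> H" for i
    using cycle_iterates[OF assms(2)] by blast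
  thus False
    using assms unfolding orbits_leave_def by blast
qed

definition ancestors :: "('a \<Rightarrow> 'a) \<Rightarrow> 'a set \<Rightarrow> 'a \<Rightarrow> 'a set" where
  "ancestors h H x = {y \<in> H - {x}. reaches_within h H y x}"

(* If the routing entries on T follow h, then T is a forwarding cycle or all its at least k
   flows pass through the exit r. *)
definition good_piece :: "('a \<Rightarrow> 'a) \<Rightarrow> nat \<Rightarrow> 'a set \<Rightarrow> bool" where
  "good_piece h k T \<longleftrightarrow> T \<noteq> {} \<and> finite T \<and> card T \<le> 2 * k \<and>
     (h ` T \<subseteq> T \<or> (\<exists>r. r \<notin> T \<and> h ` T \<subseteq> insert r T \<and> k \<le> card T))"

lemma finite_ancestors: "finite H \<Longrightarrow> finite (ancestors h H x)"
  by (simp add: ancestors_def)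

lemma subtree_step:
  assumes "y \<in> insert c (ancestors h H c)" "y \<noteq> c"
  shows "h y \<in> insert c (ancestors h H c)"
proof -
  have "reaches_within h H y c"
    using assms by (simp add: ancestors_def)
  hence "reaches_within h H (h y) c"
    using assms(2) by (rule reaches_within_stepD)
  moreover have "h y \<in> H" if "h y \<noteq> c"
    using reaches_within_stepD(1)[OF \<open>reaches_within h H (h y) c\<close> that] .
  ultimately show ?thesis
    by (auto simp: ancestors_def)
qed

lemma subtree_pred:
  assumes "y \<in> H" "h y \<in> insert c (ancestors h H c)"
  shows "y \<in> insert c (ancestors h H c)"
proof -
  have "reaches_within h H (h y) c"
    using assms(2) by (auto simp: ancestors_def)
  hence "reaches_within h H y c"
    by (rule reaches_within_step[OF assms(1)])
  thus ?thesis
    using assms(1) by (auto simp: ancestors_def)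
qed

lemma subtree_child:
  assumes "orbits_leave h H" "c \<in> H" "h c = x" "c \<noteq> x"
  shows "insert c (ancestors h H c) \<subseteq> ancestors h H x" "x \<notin> insert c (ancestors h H c)"
proof -
  have "reaches_within h H c x"
    using reaches_within_step[OF assms(2)] assms(3) by simp
  show "x \<notin> insert c (ancestors h H c)"
  proof
    assume "x \<in> insert c (ancestors h H c)"
    hence "reaches_within h H (h c) c"
      using assms(3,4) by (simp add: ancestors_def)
    thus False
      using orbits_leave_no_cycle[OF assms(1,2)] by blast
  qed
  moreover have "reaches_within h H y x" if "y \<in> ancestors h H c" for y
    using that \<open>reaches_within h H c x\<close> by (auto simp: ancestors_def dest: reaches_within_trans)
  ultimately show "insert c (ancestors h H c) \<subseteq> ancestors h H x"
    using assms(2,4) \<open>reaches_within h H c x\<close> by (auto simp: ancestors_def)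
qed

lemma card_le_exits_if_few_ancestors:
  assumes "finite H" "orbits_leave h H" "\<And>x. card (ancestors h H x) < k"
  shows "card H \<le> k * card (h ` H - H)"
proof -
  have "H \<subseteq> (\<Union>e\<in>h ` H - H. ancestors h H e)"
  proof
    fix y assume "y \<in> H"
    then obtain e where "e \<in> h ` H - H" "reaches_within h H y e"
      using orbits_leave_reaches_exit[OF assms(2)] by blast
    thus "y \<in> (\<Union>e\<in>h ` H - H. ancestors h H e)"
      using \<open>y \<in> H\<close> by (auto simp: ancestors_def)
  qed
  hence "card H \<le> card (\<Union>e\<in>h ` H - H. ancestors h H e)"
    using assms(1) by (intro card_mono) (auto simp: finite_ancestors)
  also have "\<dots> \<le> (\<Sum>e\<in>h ` H - H. card (ancestors h H e))"
    using assms(1) by (intro card_UN_le) auto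
  also have "\<dots> \<le> (\<Sum>e\<in>h ` H - H. k)"
    using assms(3) by (intro sum_mono less_imp_le)
  finally show ?thesis
    by (simp add: mult.commute)
qed

lemma card_UN_between:
  assumes "finite C" "\<And>c. c \<in> C \<Longrightarrow> finite (B c) \<and> card (B c) \<le> k" "k \<le> card (\<Union>c\<in>C. B c)"
  shows "\<exists>C'\<subseteq>C. k \<le> card (\<Union>c\<in>C'. B c) \<and> card (\<Union>c\<in>C'. B c) \<le> 2 * k"
  using assms
proof (induction C rule: finite_induct)
  case (insert c C)
  show ?case
  proof (cases "k \<le> card (\<Union>c\<in>C. B c)")
    case True
    thus ?thesis
      using insert by (metis (no_types, lifting) insert_iff subset_insertI2)
  next
    case False
    have "card (\<Union>c\<in>insert c C. B c) \<le> card (B c) + card (\<Union>c\<in>C. B c)"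
      by (simp add: card_Un_le)
    also have "\<dots> \<le> 2 * k"
      using insert.prems(1)[of c] False by simp
    finally show ?thesis
      using insert.prems(2) by (intro exI[of _ "insert c C"]) auto
  qed
qed simp

lemma child_subtrees_good_piece:
  fixes h :: "'a \<Rightarrow> 'a" and H C :: "'a set"
  defines "T \<equiv> \<Union>c\<in>C. insert c (ancestors h H c)"
  assumes "orbits_leave h H" "C \<subseteq> {c \<in> H. h c = x \<and> c \<noteq> x}" "1 \<le> k" "k \<le> card T" "card T \<le> 2 * k"
  shows "T \<subseteq> H" "good_piece h k T" "\<forall>y\<in>H. h y \<in> T \<longrightarrow> y \<in> T"
proof -
  have "insert c (ancestors h H c) \<subseteq> H" "x \<notin> insert c (ancestors h H c)" if "c \<in> C" for c
    using that assms(3) subtree_child[OF assms(2), of c x] by (auto simp: ancestors_def)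
  hence "T \<subseteq> H" "x \<notin> T"
    by (auto simp: T_def)
  moreover have "h ` T \<subseteq> insert x T"
  proof
    fix z assume "z \<in> h ` T"
    then obtain c y where "c \<in> C" "y \<in> insert c (ancestors h H c)" "z = h y"
      by (auto simp: T_def)
    thus "z \<in> insert x T"
      using assms(3) subtree_step[of y c h H] by (cases "y = c") (auto simp: T_def)
  qed
  moreover have "finite T" "T \<noteq> {}"
    using assms(4,5) card_gt_0_iff[of T] by auto
  ultimately show "T \<subseteq> H" "good_piece h k T"
    using assms(5,6) by (auto simp: good_piece_def)
  show "\<forall>y\<in>H. h y \<in> T \<longrightarrow> y \<in> T"
    using subtree_pred[of _ H h] by (auto simp: T_def)
qed

lemma exists_subtree_piece:
  assumes "finite H" "orbits_leave h H" "1 \<le> k" "k \<le> card (ancestors h H x0)"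
  shows "\<exists>T\<subseteq>H. good_piece h k T \<and> (\<forall>y\<in>H. h y \<in> T \<longrightarrow> y \<in> T)"
proof -
  obtain x where x: "k \<le> card (ancestors h H x)"
    and x_min: "\<And>x'. k \<le> card (ancestors h H x') \<Longrightarrow> card (ancestors h H x) \<le> card (ancestors h H x')"
    using ex_has_least_nat[of "\<lambda>x. k \<le> card (ancestors h H x)" x0 "\<lambda>x. card (ancestors h H x)"] assms(4)
    by blast
  define children where "children = {c \<in> H. h c = x \<and> c \<noteq> x}"
  define S where "S c = insert c (ancestors h H c)" for c
  have S_card: "finite (S c) \<and> card (S c) \<le> k" if "c \<in> children" for c
  proof -
    have "ancestors h H c \<subset> ancestors h H x"
      using subtree_child[OF assms(2), of c x] that by (auto simp: children_def ancestors_def)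
    hence "card (ancestors h H c) < card (ancestors h H x)"
      using assms(1) by (intro psubset_card_mono finite_ancestors)
    hence "card (ancestors h H c) < k"
      using x_min by (meson not_le)
    thus ?thesis
      using assms(1) by (simp add: S_def finite_ancestors card_insert_if)
  qed
  have "ancestors h H x \<subseteq> (\<Union>c\<in>children. S c)"
  proof
    fix y assume y: "y \<in> ancestors h H x"
    then obtain c where c: "c \<in> H" "h c = x" "reaches_within h H y c"
      using reaches_within_last_step[of h H y x] by (auto simp: ancestors_def)
    have "c \<noteq> x"
      using orbits_leave_no_cycle[OF assms(2), of c] c by auto
    thus "y \<in> (\<Union>c\<in>children. S c)"
      using y c by (auto simp: children_def S_def ancestors_def)
  qed
  moreover have "finite children"
    using assms(1) by (simp add: children_def)
  hence "finite (\<Union>c\<in>children. S c)"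
    using S_card by blast
  ultimately have "k \<le> card (\<Union>c\<in>children. S c)"
    using x card_mono by (metis order_trans)
  hence "\<exists>C\<subseteq>children. k \<le> card (\<Union>c\<in>C. S c) \<and> card (\<Union>c\<in>C. S c) \<le> 2 * k"
    by (intro card_UN_between \<open>finite children\<close> S_card)
  then obtain C where "C \<subseteq> children" "k \<le> card (\<Union>c\<in>C. S c)" "card (\<Union>c\<in>C. S c) \<le> 2 * k"
    by blast
  hence "(\<Union>c\<in>C. S c) \<subseteq> H \<and> good_piece h k (\<Union>c\<in>C. S c) \<and>
      (\<forall>y\<in>H. h y \<in> (\<Union>c\<in>C. S c) \<longrightarrow> y \<in> (\<Union>c\<in>C. S c))"
    using child_subtrees_good_piece[OF assms(2), of C x k] assms(3) by (simp add: children_def S_def)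
  thus ?thesis
    by blast
qed

lemma tree_pieces:
  assumes "finite H" "orbits_leave h H" "1 \<le> k"
  shows "\<exists>\<T>\<subseteq>Pow H. disjoint \<T> \<and> (\<forall>T\<in>\<T>. good_piece h k T) \<and>
           card H \<le> 2 * k * card \<T> + k * card (h ` H - H)"
  using assms(1,2)
proof (induction "card H" arbitrary: H rule: less_induct)
  case less
  show ?case
  proof (cases "\<exists>x. k \<le> card (ancestors h H x)")
    case False
    thus ?thesis
      using card_le_exits_if_few_ancestors[OF less.prems] by (intro exI[of _ "{}"]) (auto simp: not_le)
  next
    case True
    then obtain T where T: "T \<subseteq> H" "good_piece h k T" "\<forall>y\<in>H. h y \<in> T \<longrightarrow> y \<in> T"
      using exists_subtree_piece[OF less.prems assms(3)] by blast
    have "T \<noteq> {}" "finite T" "card T \<le> 2 * k"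
      using T(2) by (auto simp: good_piece_def)
    hence "card (H - T) < card H"
      using T(1) less.prems(1) by (intro psubset_card_mono) auto
    then obtain \<T> where \<T>: "\<T> \<subseteq> Pow (H - T)" "disjoint \<T>" "\<forall>T\<in>\<T>. good_piece h k T"
        "card (H - T) \<le> 2 * k * card \<T> + k * card (h ` (H - T) - (H - T))"
      using less.hyps[of "H - T"] less.prems orbits_leave_subset[of h H "H - T"] by auto
    have "h ` (H - T) - (H - T) \<subseteq> h ` H - H"
      using T(3) by auto
    hence "card (h ` (H - T) - (H - T)) \<le> card (h ` H - H)"
      using less.prems(1) by (intro card_mono) auto
    have "card H = card (H - T) + card T"
      using T(1) \<open>finite T\<close> less.prems(1) by (metis card_Diff_subset card_mono le_add_diff_inverse2)
    also have "\<dots> \<le> 2 * k * card \<T> + k * card (h ` H - H) + 2 * k"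
      using \<T>(4) \<open>card T \<le> 2 * k\<close> mult_left_mono[OF \<open>card (h ` (H - T) - (H - T)) \<le> _\<close>, of k]
      by linarith
    also have "\<dots> = 2 * k * card (insert T \<T>) + k * card (h ` H - H)"
    proof -
      have "finite \<T>"
        using \<T>(1) less.prems(1) by (meson Diff_subset Pow_mono finite_Pow_iff finite_subset)
      moreover have "T \<notin> \<T>"
        using \<T>(1) \<open>T \<noteq> {}\<close> by blast
      ultimately show ?thesis
        by simp
    qed
    finally have "card H \<le> 2 * k * card (insert T \<T>) + k * card (h ` H - H)" .
    moreover have "disjoint (insert T \<T>)"
      using \<T>(1,2) by (auto simp: pairwise_insert disjnt_def)
    ultimately show ?thesis
      using \<T>(1,3) T(1,2) by (intro exI[of _ "insert T \<T>"]) auto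
  qed
qed

definition cycle_minima :: "('a::linorder \<Rightarrow> 'a) \<Rightarrow> 'a set \<Rightarrow> 'a set" where
  "cycle_minima h H = {z \<in> H. reaches_within h H (h z) z \<and> (\<forall>y. reaches_within h H z y \<longrightarrow> z \<le> y)}"

definition orbit_prefix :: "('a \<Rightarrow> 'a) \<Rightarrow> nat \<Rightarrow> 'a \<Rightarrow> 'a set" where
  "orbit_prefix h k z = (\<lambda>i. (h ^^ i) z) ` {..<k}"

lemma funpow_apply_add: "(h ^^ m) ((h ^^ n) x) = (h ^^ (m + n)) x"
  by (simp add: funpow_add)

lemma orbit_eventually_periodic:
  assumes "finite H" "\<And>i. (h ^^ i) y \<in> H"
  shows "\<exists>a p. (h ^^ Suc p) ((h ^^ a) y) = (h ^^ a) y"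
proof -
  have "\<not> inj_on (\<lambda>i. (h ^^ i) y) {..card H}"
  proof
    assume "inj_on (\<lambda>i. (h ^^ i) y) {..card H}"
    hence "card {..card H} \<le> card H"
      using assms by (intro card_inj_on_le) auto
    thus False
      by simp
  qed
  then obtain a b where "a < b" and eq: "(h ^^ a) y = (h ^^ b) y"
    unfolding inj_on_def by (metis linorder_neq_iff)
  then obtain p where "b = Suc (a + p)"
    by (auto simp: less_iff_Suc_add)
  hence "(h ^^ Suc p) ((h ^^ a) y) = (h ^^ b) y"
    by (simp add: funpow_apply_add add.commute)
  thus ?thesis
    unfolding eq[symmetric] by blast
qed

lemma periodic_reaches_within:
  assumes "(h ^^ Suc p) v = v" "\<And>i. (h ^^ i) v \<in> H"
  shows "reaches_within h H (h v) v"
  unfolding reaches_within_def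
proof (intro exI[of _ p] conjI allI impI)
  show "(h ^^ p) (h v) = v"
    using assms(1) by (simp add: funpow_swap1)
  show "(h ^^ i) (h v) \<in> H" for i
    using assms(2)[of "Suc i"] by (simp add: funpow_swap1)
qed

lemma orbits_leave_Diff_cycle_minima:
  assumes "finite H"
  shows "orbits_leave h (H - cycle_minima h H)"
  unfolding orbits_leave_def
proof (rule ballI, rule ccontr)
  fix y assume "y \<in> H - cycle_minima h H" "\<not> (\<exists>i. (h ^^ i) y \<notin> H - cycle_minima h H)"
  hence orbit: "(h ^^ i) y \<in> H - cycle_minima h H" for i
    by blast
  then obtain a p where period: "(h ^^ Suc p) ((h ^^ a) y) = (h ^^ a) y"
    using orbit_eventually_periodic[OF assms, of h y] by blast
  define Orb where "Orb = range (\<lambda>i. (h ^^ (i + a)) y)"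
  have Orb_sub: "Orb \<subseteq> H - cycle_minima h H"
    using orbit by (auto simp: Orb_def)
  hence "finite Orb"
    using assms finite_subset by blast
  define z where "z = Min Orb"
  have "z \<in> Orb"
    unfolding z_def using \<open>finite Orb\<close> by (intro Min_in) (auto simp: Orb_def)
  then obtain t where t: "z = (h ^^ t) ((h ^^ a) y)"
    by (auto simp: Orb_def funpow_apply_add)
  have z_iter: "(h ^^ i) z \<in> Orb" for i
    unfolding Orb_def t funpow_apply_add by (rule range_eqI[of _ _ "i + t"]) (simp add: add.assoc)
  have "(h ^^ Suc p) z = (h ^^ t) ((h ^^ Suc p) ((h ^^ a) y))"
    unfolding t funpow_apply_add by (simp add: ac_simps)
  hence "(h ^^ Suc p) z = z"
    using period t by simp
  hence "reaches_within h H (h z) z"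
    using z_iter Orb_sub by (intro periodic_reaches_within) auto
  moreover have "z \<le> w" if reach: "reaches_within h H z w" for w
  proof -
    obtain j where "(h ^^ j) z = w"
      using reach by (auto simp: reaches_within_def)
    thus ?thesis
      using z_iter[of j] \<open>finite Orb\<close> unfolding z_def by (metis Min_le)
  qed
  ultimately have "z \<in> cycle_minima h H"
    using \<open>z \<in> Orb\<close> Orb_sub by (auto simp: cycle_minima_def)
  thus False
    using \<open>z \<in> Orb\<close> Orb_sub by blast
qed

lemma good_piece_orbit_prefix:
  assumes "1 \<le> k"
  shows "good_piece h k (orbit_prefix h k z)"
proof -
  let ?T = "orbit_prefix h k z"
  have basic: "?T \<noteq> {}" "finite ?T" "card ?T \<le> 2 * k"
    using assms card_image_le[of "{..<k}" "\<lambda>i. (h ^^ i) z"] by (auto simp: orbit_prefix_def lessThan_empty_iff)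
  have step: "h ` ?T \<subseteq> insert ((h ^^ k) z) ?T"
  proof
    fix x assume "x \<in> h ` ?T"
    then obtain i where "i < k" "x = (h ^^ Suc i) z"
      by (auto simp: orbit_prefix_def)
    thus "x \<in> insert ((h ^^ k) z) ?T"
      by (cases "Suc i = k") (auto simp: orbit_prefix_def intro!: image_eqI[of _ _ "Suc i"])
  qed
  show ?thesis
  proof (cases "(h ^^ k) z \<in> ?T")
    case True
    thus ?thesis
      using basic step by (auto simp: good_piece_def)
  next
    case False
    have "inj_on (\<lambda>i. (h ^^ i) z) {..<k}"
    proof (rule ccontr)
      assume "\<not> inj_on (\<lambda>i. (h ^^ i) z) {..<k}"
      then obtain a b where ab: "a < b" "b < k" "(h ^^ a) z = (h ^^ b) z"
        unfolding inj_on_def by (metis lessThan_iff linorder_neq_iff)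
      have "(h ^^ k) z = (h ^^ ((k - b) + b)) z"
        using ab by simp
      also have "\<dots> = (h ^^ (k - b)) ((h ^^ a) z)"
        using ab by (simp only: funpow_add comp_apply)
      also have "\<dots> = (h ^^ (k - b + a)) z"
        by (simp only: funpow_add comp_apply)
      finally have "(h ^^ k) z \<in> ?T"
        using ab by (auto simp: orbit_prefix_def)
      thus False
        using False by blast
    qed
    hence "card ?T = k"
      by (simp add: orbit_prefix_def card_image)
    thus ?thesis
      using basic step False by (auto simp: good_piece_def)
  qed
qed

lemma orbit_prefix_subset: "z \<in> cycle_minima h H \<Longrightarrow> orbit_prefix h k z \<subseteq> H"
  using cycle_iterates[of z H h] by (auto simp: orbit_prefix_def cycle_minima_def)

lemma orbit_prefix_disjoint:
  assumes "z \<in> cycle_minima h H" "z' \<in> cycle_minima h H" "z \<noteq> z'"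
  shows "orbit_prefix h k z \<inter> orbit_prefix h k z' = {}"
proof (rule ccontr)
  assume "orbit_prefix h k z \<inter> orbit_prefix h k z' \<noteq> {}"
  then obtain i j where ij: "(h ^^ i) z = (h ^^ j) z'"
    by (auto simp: orbit_prefix_def)
  have le: "y \<le> y'" if "y \<in> cycle_minima h H" "y' \<in> cycle_minima h H" "(h ^^ i) y = (h ^^ j) y'"
    for y y' i j
  proof -
    have "reaches_within h H y ((h ^^ i) y)" "reaches_within h H y' ((h ^^ j) y')"
      using that cycle_iterates[of y H h i] cycle_iterates[of y' H h j] by (auto simp: cycle_minima_def)
    hence "reaches_within h H ((h ^^ j) y') y'"
      using that cycle_reaches_back[of y' H h] by (auto simp: cycle_minima_def)
    hence "reaches_within h H y y'"
      using \<open>reaches_within h H y ((h ^^ i) y)\<close> that(3) reaches_within_trans by metis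
    thus "y \<le> y'"
      using that(1) by (auto simp: cycle_minima_def)
  qed
  show False
    using le[OF assms(1,2) ij] le[OF assms(2,1) ij[symmetric]] assms(3) by simp
qed

lemma cycle_pieces:
  assumes "1 \<le> k" "R \<le> card (cycle_minima h H)"
  shows "\<exists>\<T>\<subseteq>Pow H. disjoint \<T> \<and> (\<forall>T\<in>\<T>. good_piece h k T) \<and> R \<le> card \<T>"
proof (intro exI conjI)
  let ?Z = "cycle_minima h H"
  have "orbit_prefix h k z \<noteq> {}" for z
    using good_piece_orbit_prefix[OF assms(1), of h z] by (simp add: good_piece_def)
  hence "inj_on (orbit_prefix h k) ?Z"
    using orbit_prefix_disjoint[of _ h H _ k] by (intro inj_onI) (metis inf.idem)
  thus "R \<le> card (orbit_prefix h k ` ?Z)"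
    using assms(2) by (simp add: card_image)
  show "orbit_prefix h k ` ?Z \<subseteq> Pow H"
    using orbit_prefix_subset by blast
  show "disjoint (orbit_prefix h k ` ?Z)"
    using orbit_prefix_disjoint[of _ h H _ k] by (auto simp: pairwise_def disjnt_def)
  show "\<forall>T\<in>orbit_prefix h k ` ?Z. good_piece h k T"
    by (simp add: good_piece_orbit_prefix[OF assms(1)])
qed

lemma disjoint_good_pieces:
  fixes h :: "'a::linorder \<Rightarrow> 'a"
  assumes "finite H" "1 \<le> k" "2 * k * R + k * (card (h ` H - H) + R) + R < card H"
  shows "\<exists>\<T>\<subseteq>Pow H. disjoint \<T> \<and> (\<forall>T\<in>\<T>. good_piece h k T) \<and> card \<T> = R"
proof -
  let ?Z = "cycle_minima h H"
  have "\<exists>\<T>\<subseteq>Pow H. disjoint \<T> \<and> (\<forall>T\<in>\<T>. good_piece h k T) \<and> R \<le> card \<T>"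
  proof (cases "R \<le> card ?Z")
    case True
    thus ?thesis
      using cycle_pieces[OF assms(2)] by blast
  next
    case False
    have "?Z \<subseteq> H"
      by (auto simp: cycle_minima_def)
    have "finite (H - ?Z)"
      using assms(1) by simp
    then obtain \<T> where \<T>: "\<T> \<subseteq> Pow (H - ?Z)" "disjoint \<T>" "\<forall>T\<in>\<T>. good_piece h k T"
      "card (H - ?Z) \<le> 2 * k * card \<T> + k * card (h ` (H - ?Z) - (H - ?Z))"
      using tree_pieces[OF _ orbits_leave_Diff_cycle_minima[OF assms(1)] assms(2)] by blast
    have "card (h ` (H - ?Z) - (H - ?Z)) \<le> card ((h ` H - H) \<union> ?Z)"
      using assms(1) \<open>?Z \<subseteq> H\<close> by (intro card_mono) (auto intro: finite_subset)
    also have "\<dots> \<le> card (h ` H - H) + card ?Z"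
      by (rule card_Un_le)
    finally have "k * card (h ` (H - ?Z) - (H - ?Z)) \<le> k * (card (h ` H - H) + R)"
      using False by (intro mult_left_mono) linarith+
    moreover have "card H = card (H - ?Z) + card ?Z"
      using \<open>?Z \<subseteq> H\<close> assms(1) by (metis card_Diff_subset card_mono finite_subset le_add_diff_inverse2)
    ultimately have card_H: "card H \<le> 2 * k * card \<T> + k * (card (h ` H - H) + R) + R"
      using \<T>(4) False by linarith
    have "R \<le> card \<T>"
    proof (rule ccontr)
      assume "\<not> R \<le> card \<T>"
      hence "2 * k * card \<T> \<le> 2 * k * R"
        by simp
      thus False
        using card_H assms(3) by linarith
    qed
    thus ?thesis
      using \<T> by blast
  qed
  then obtain \<T> where \<T>: "\<T> \<subseteq> Pow H" "disjoint \<T>" "\<forall>T\<in>\<T>. good_piece h k T" "R \<le> card \<T>"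
    by blast
  then obtain \<T>' where "\<T>' \<subseteq> \<T>" "card \<T>' = R"
    by (meson obtain_subset_with_card_n)
  thus ?thesis
    using \<T> pairwise_subset[of disjnt \<T> \<T>'] by (intro exI[of _ \<T>']) auto
qed

section \<open>Loads\<close>

lemma flow_visits_iff: "flow_visits \<alpha> d u v \<longleftrightarrow> reaches_within \<alpha> (- {d}) u v"
  by (simp add: flow_visits_def reaches_within_def)

lemma on_cycle_iff: "on_cycle \<alpha> d v \<longleftrightarrow> v \<noteq> d \<and> reaches_within \<alpha> (- {d}) (\<alpha> v) v"
proof
  assume "on_cycle \<alpha> d v"
  then obtain k where k: "v \<noteq> d" "0 < k" "(\<alpha> ^^ k) v = v" "\<forall>j<k. (\<alpha> ^^ j) v \<noteq> d"
    by (auto simp: on_cycle_def)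
  then obtain p where "k = Suc p"
    using gr0_implies_Suc by blast
  thus "v \<noteq> d \<and> reaches_within \<alpha> (- {d}) (\<alpha> v) v"
    using k unfolding reaches_within_def by (auto simp: funpow_swap1 intro!: exI[of _ p])
next
  assume "v \<noteq> d \<and> reaches_within \<alpha> (- {d}) (\<alpha> v) v"
  then obtain p where p: "v \<noteq> d" "(\<alpha> ^^ p) (\<alpha> v) = v" "\<forall>i<p. (\<alpha> ^^ i) (\<alpha> v) \<noteq> d"
    by (auto simp: reaches_within_def)
  have "(\<alpha> ^^ j) v \<noteq> d" if "j < Suc p" for j
    using that p by (cases j) (auto simp: funpow_swap1)
  thus "on_cycle \<alpha> d v"
    using p unfolding on_cycle_def by (auto simp: funpow_swap1 intro!: exI[of _ "Suc p"])
qed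

lemma load_ge_card_visitors:
  "k \<le> card {u \<in> {..<n} - {d}. flow_visits \<alpha> d u v} \<Longrightarrow> ereal (real k) \<le> load n \<alpha> d v"
  by (auto simp: load_def)

lemma load_infinite_if_orbit_avoids_dest:
  assumes "\<forall>v<n. \<alpha> v < n" "u \<in> {..<n} - {d}" "\<And>j. (\<alpha> ^^ j) u \<noteq> d"
  shows "\<exists>v\<in>{..<n} - {d}. load n \<alpha> d v = \<infinity>"
proof -
  let ?U = "{..<n} - {d}"
  have orbit: "(\<alpha> ^^ j) u \<in> ?U" for j
  proof -
    have "(\<alpha> ^^ j) u < n"
      using assms(1,2) by (induction j) auto
    thus ?thesis
      using assms(3)[of j] by simp
  qed
  then obtain a p where period: "(\<alpha> ^^ Suc p) ((\<alpha> ^^ a) u) = (\<alpha> ^^ a) u"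
    using orbit_eventually_periodic[of ?U \<alpha> u] by blast
  define v where "v = (\<alpha> ^^ a) u"
  have v_orbit: "(\<alpha> ^^ i) v \<in> ?U" for i
    using orbit[of "i + a"] by (simp add: v_def funpow_apply_add)
  hence "reaches_within \<alpha> ?U (\<alpha> v) v"
    using period by (intro periodic_reaches_within) (auto simp: v_def)
  hence "on_cycle \<alpha> d v"
    using v_orbit[of 0] by (auto simp: on_cycle_iff intro: reaches_within_mono)
  moreover have "flow_visits \<alpha> d u v"
    using assms(3) by (auto simp: flow_visits_def v_def)
  ultimately show ?thesis
    using assms(2) v_orbit[of 0] by (auto simp: load_def)
qed

lemma load_infinite_if_closed:
  assumes "\<forall>v<n. \<alpha> v < n" "T \<subseteq> {..<n} - {d}" "T \<noteq> {}" "\<alpha> ` T \<subseteq> T"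
  shows "\<exists>v\<in>{..<n} - {d}. load n \<alpha> d v = \<infinity>"
proof -
  obtain u where "u \<in> T"
    using assms(3) by blast
  hence "(\<alpha> ^^ j) u \<in> T" for j
    using assms(4) by (induction j) auto
  thus ?thesis
    using assms(1,2) \<open>u \<in> T\<close> by (intro load_infinite_if_orbit_avoids_dest[of n \<alpha> u]) auto
qed

lemma load_ge_hits:
  assumes "P \<subseteq> {..<n} - {d}" "finite P" "k \<le> hits P w \<alpha>"
  shows "ereal (real k) \<le> load n \<alpha> d w"
proof (rule load_ge_card_visitors)
  have "{a\<in>P. \<alpha> a = w} \<subseteq> {u \<in> {..<n} - {d}. flow_visits \<alpha> d u w}"
    using assms(1) by (auto simp: flow_visits_def intro!: exI[of _ 1])
  hence "hits P w \<alpha> \<le> card {u \<in> {..<n} - {d}. flow_visits \<alpha> d u w}"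
    unfolding hits_def by (intro card_mono) auto
  thus "k \<le> card {u \<in> {..<n} - {d}. flow_visits \<alpha> d u w}"
    using assms(3) by simp
qed

lemma load_ge_funnel:
  assumes "\<forall>v<n. \<alpha> v < n" "T \<subseteq> {..<n} - {d}" "T \<noteq> {}" "finite T"
    and "r \<in> {..<n} - {d}" "r \<notin> T" "\<alpha> ` T \<subseteq> insert r T"
  shows "\<exists>v\<in>{..<n} - {d}. ereal (real (card T)) \<le> load n \<alpha> d v"
proof (cases "orbits_leave \<alpha> T")
  case False
  then obtain u where "u \<in> T" "\<And>j. (\<alpha> ^^ j) u \<in> T"
    unfolding orbits_leave_def by blast
  hence "\<exists>v\<in>{..<n} - {d}. load n \<alpha> d v = \<infinity>"
    using assms(1,2) by (intro load_infinite_if_orbit_avoids_dest[of n \<alpha> u]) auto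
  thus ?thesis
    by force
next
  case True
  have "flow_visits \<alpha> d u r" if "u \<in> T" for u
  proof -
    obtain e where "e \<in> \<alpha> ` T - T" "reaches_within \<alpha> T u e"
      using orbits_leave_reaches_exit[OF True \<open>u \<in> T\<close>] by blast
    moreover have "T \<subseteq> - {d}"
      using assms(2) by blast
    ultimately show ?thesis
      using assms(7) by (auto simp: flow_visits_iff intro: reaches_within_mono)
  qed
  hence "insert r T \<subseteq> {u \<in> {..<n} - {d}. flow_visits \<alpha> d u r}"
    using assms(2,5) by (auto simp: flow_visits_iff)
  hence "card (insert r T) \<le> card {u \<in> {..<n} - {d}. flow_visits \<alpha> d u r}"
    by (intro card_mono) auto
  hence "ereal (real (card T)) \<le> load n \<alpha> d r"
    using assms(4,6) by (intro load_ge_card_visitors) simp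
  thus ?thesis
    using assms(5) by blast
qed

(* Only the routing entries in B may be used: the bound must hold for every completion of them. *)
definition forces_load :: "nat \<Rightarrow> nat \<Rightarrow> nat set \<Rightarrow> nat \<Rightarrow> (nat \<Rightarrow> nat) \<Rightarrow> bool" where
  "forces_load n d B k \<alpha> \<longleftrightarrow> (\<forall>\<beta>. (\<forall>v\<in>B. \<beta> v = \<alpha> v) \<longrightarrow> (\<forall>v<n. \<beta> v < n) \<longrightarrow>
     (\<exists>v\<in>{..<n} - {d}. ereal (real k) \<le> load n \<beta> d v))"

lemma forces_load_hits:
  assumes "B \<subseteq> {..<n} - {d}" "finite B" "w \<in> {..<n} - {d}" "k \<le> hits B w \<alpha>"
  shows "forces_load n d B k \<alpha>"
  unfolding forces_load_def
proof (intro allI impI)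
  fix \<beta> assume "\<forall>v\<in>B. \<beta> v = \<alpha> v"
  hence "hits B w \<beta> = hits B w \<alpha>"
    by (intro hits_cong) auto
  thus "\<exists>v\<in>{..<n} - {d}. ereal (real k) \<le> load n \<beta> d v"
    using load_ge_hits[OF assms(1,2), of k w \<beta>] assms(3,4) by auto
qed

lemma forces_load_good_piece:
  assumes "B \<subseteq> {..<n} - {d}" "T \<subseteq> B" "good_piece h k T" "\<forall>v\<in>T. \<alpha> v = h v"
    and "h ` T \<subseteq> {..<n} - {d}"
  shows "forces_load n d B k \<alpha>"
  unfolding forces_load_def
proof (intro allI impI)
  fix \<beta> assume "\<forall>v\<in>B. \<beta> v = \<alpha> v" and \<beta>: "\<forall>v<n. \<beta> v < n"
  hence \<beta>_T: "\<beta> ` T = h ` T"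
    using assms(2,4) by (intro image_cong) auto
  have T: "T \<subseteq> {..<n} - {d}" "T \<noteq> {}" "finite T"
    using assms(1-3) by (auto simp: good_piece_def)
  show "\<exists>v\<in>{..<n} - {d}. ereal (real k) \<le> load n \<beta> d v"
  proof (cases "h ` T \<subseteq> T")
    case True
    thus ?thesis
      using load_infinite_if_closed[OF \<beta> T(1,2)] \<beta>_T by force
  next
    case False
    then obtain r where r: "r \<notin> T" "h ` T \<subseteq> insert r T" "k \<le> card T"
      using assms(3) by (auto simp: good_piece_def)
    hence "r \<in> h ` T"
      using False by blast
    then obtain v where "v \<in> {..<n} - {d}" "ereal (real (card T)) \<le> load n \<beta> d v"
      using load_ge_funnel[OF \<beta> T, of r] r \<beta>_T assms(5) by blast
    moreover have "ereal (real k) \<le> ereal (real (card T))"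
      using r(3) by simp
    ultimately show ?thesis
      by (meson order_trans)
  qed
qed

section \<open>The failure set\<close>

definition edges_to :: "nat set set \<Rightarrow> nat \<Rightarrow> nat set \<Rightarrow> nat set set" where
  "edges_to E d B = {{v, d} | v. v \<in> B \<and> {v, d} \<in> E}"

lemma edges_to_subset: "edges_to E d B \<subseteq> {e \<in> E. d \<in> e}"
  by (auto simp: edges_to_def)

lemma card_edges_to_le: "finite B \<Longrightarrow> card (edges_to E d B) \<le> card B"
proof -
  assume "finite B"
  have "edges_to E d B = (\<lambda>v. {v, d}) ` {v \<in> B. {v, d} \<in> E}"
    by (auto simp: edges_to_def)
  also have "card \<dots> \<le> card {v \<in> B. {v, d} \<in> E}"
    by (rule card_image_le) (simp add: \<open>finite B\<close>)
  also have "\<dots> \<le> card B"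
    using \<open>finite B\<close> by (intro card_mono) auto
  finally show ?thesis .
qed

lemma failed_at_edges_to:
  assumes "v \<in> B" "v \<noteq> d" "d \<notin> B"
  shows "failed_at (edges_to E d B) v = {d} \<inter> nbrs E v"
  using assms by (auto simp: failed_at_def edges_to_def nbrs_def doubleton_eq_iff insert_commute)

lemma nbrs_subset: "undirected_graph n E \<Longrightarrow> nbrs E v \<subseteq> {..<n}"
  unfolding undirected_graph_def nbrs_def by (force simp: doubleton_eq_iff)

lemma set_pmf_protocol_subset:
  assumes "undirected_graph n E" "failover_protocol n E D" "v < n" "d < n" "Fv \<subseteq> nbrs E v"
  shows "set_pmf (D v Fv d) \<subseteq> {..<n} - (Fv - {v})"
  using assms nbrs_subset[OF assms(1), of v] unfolding failover_protocol_def by blast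

lemma set_pmf_rerouted_subset:
  assumes "undirected_graph n E" "failover_protocol n E D" "v \<in> {..<n} - {d}" "d < n"
  shows "set_pmf (D v ({d} \<inter> nbrs E v) d) \<subseteq> {..<n} - {d}"
proof -
  have "set_pmf (D v ({d} \<inter> nbrs E v) d) \<subseteq> (nbrs E v - ({d} \<inter> nbrs E v)) \<union> {v}"
    using assms(2-4) unfolding failover_protocol_def by auto
  thus ?thesis
    using nbrs_subset[OF assms(1), of v] assms(3) by auto
qed

lemma routing_entries_range:
  assumes "undirected_graph n E" "failover_protocol n E D" "d < n" "F \<subseteq> E"
    and "\<alpha> \<in> set_pmf (routing_entries n D F d)" "v < n"
  shows "\<alpha> v < n"
proof -
  have "\<alpha> v \<in> set_pmf (D v (failed_at F v) d)"
    using assms(5,6) by (auto simp: routing_entries_def set_Pi_pmf PiE_dflt_def)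
  moreover have "failed_at F v \<subseteq> nbrs E v"
    using assms(4) by (auto simp: failed_at_def nbrs_def)
  ultimately show ?thesis
    using set_pmf_protocol_subset[OF assms(1,2,6,3)] by blast
qed

lemma prob_forces_load_le_prob_overload:
  assumes "undirected_graph n E" "failover_protocol n E D" "d < n" "B \<subseteq> {..<n} - {d}" "L < real k"
  shows "measure_pmf.prob (Pi_pmf B d (\<lambda>v. D v ({d} \<inter> nbrs E v) d)) {\<alpha>. forces_load n d B k \<alpha>}
    \<le> measure_pmf.prob (routing_entries n D (edges_to E d B) d)
          {\<alpha>. \<exists>v\<in>{..<n} - {d}. ereal L < load n \<alpha> d v}"
proof -
  let ?M = "routing_entries n D (edges_to E d B) d"
  have "Pi_pmf B d (\<lambda>v. D v ({d} \<inter> nbrs E v) d) = Pi_pmf B d (\<lambda>v. D v (failed_at (edges_to E d B) v) d)"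
  proof (rule Pi_pmf_cong)
    show "D v ({d} \<inter> nbrs E v) d = D v (failed_at (edges_to E d B) v) d" if "v \<in> B" for v
      using that assms(4) by (subst failed_at_edges_to) auto
  qed simp_all
  hence "measure_pmf.prob (Pi_pmf B d (\<lambda>v. D v ({d} \<inter> nbrs E v) d)) {\<alpha>. forces_load n d B k \<alpha>}
      = measure_pmf.prob ?M {\<alpha>. forces_load n d B k \<alpha>}"
    unfolding routing_entries_def using assms(4)
    by (subst measure_Pi_pmf_subset[of "{..<n}" B]) (auto simp: forces_load_def)
  also have "\<dots> = measure_pmf.prob ?M ({\<alpha>. forces_load n d B k \<alpha>} \<inter> set_pmf ?M)"
    by (simp add: measure_Int_set_pmf)
  also have "\<dots> \<le> measure_pmf.prob ?M {\<alpha>. \<exists>v\<in>{..<n} - {d}. ereal L < load n \<alpha> d v}"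
  proof (rule measure_pmf.finite_measure_mono, safe)
    fix \<alpha> assume "forces_load n d B k \<alpha>" "\<alpha> \<in> set_pmf ?M"
    moreover have "\<forall>v<n. \<alpha> v < n"
      using routing_entries_range[OF assms(1-3) _ \<open>\<alpha> \<in> set_pmf ?M\<close>] edges_to_subset by blast
    ultimately have "\<exists>v\<in>{..<n} - {d}. ereal (real k) \<le> load n \<alpha> d v"
      by (auto simp: forces_load_def)
    moreover have "ereal L < ereal (real k)"
      using assms(5) by simp
    ultimately show "\<exists>v\<in>{..<n} - {d}. ereal L < load n \<alpha> d v"
      using less_le_trans by blast
  qed simp
  finally show ?thesis .
qed

lemma sum_pmf_sum_eq_card:
  assumes "finite U" "\<And>a. a \<in> P \<Longrightarrow> set_pmf (r a) \<subseteq> U"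
  shows "(\<Sum>w\<in>U. \<Sum>a\<in>P. pmf (r a) w) = real (card P)"
proof -
  have "(\<Sum>w\<in>U. \<Sum>a\<in>P. pmf (r a) w) = (\<Sum>a\<in>P. \<Sum>w\<in>U. pmf (r a) w)"
    by (rule sum.swap)
  also have "\<dots> = (\<Sum>a\<in>P. 1)"
    using assms by (intro sum.cong refl sum_pmf_eq_1) auto
  finally show ?thesis
    by simp
qed

lemma exists_ge_average:
  fixes f :: "'a \<Rightarrow> real"
  assumes "finite G" "G \<noteq> {}" "c \<le> (\<Sum>w\<in>G. f w)" "real (card G) \<le> g" "0 < g" "0 \<le> c"
  shows "\<exists>w\<in>G. c / g \<le> f w"
proof (rule ccontr)
  assume "\<not> (\<exists>w\<in>G. c / g \<le> f w)"
  hence "(\<Sum>w\<in>G. f w) < (\<Sum>w\<in>G. c / g)"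
    using assms(1,2) by (intro sum_strict_mono) auto
  also have "\<dots> \<le> c"
    using assms(4-6) by (simp add: field_simps mult_left_mono)
  finally show False
    using assms(3) by simp
qed

lemma exists_heavily_hit_target:
  fixes \<sigma> :: "'a \<Rightarrow> real"
  assumes "finite U" "real (card U) * \<theta> < (\<Sum>w\<in>U. \<sigma> w)" "real (card {w\<in>U. \<theta> \<le> \<sigma> w}) < g"
    and "0 \<le> \<theta>"
  shows "\<exists>w\<in>U. ((\<Sum>w\<in>U. \<sigma> w) - real (card U) * \<theta>) / g \<le> \<sigma> w"
proof -
  define G where "G = {w\<in>U. \<theta> \<le> \<sigma> w}"
  have "G \<subseteq> U" "finite G"
    using assms(1) by (auto simp: G_def)
  have "(\<Sum>w\<in>U - G. \<sigma> w) \<le> (\<Sum>w\<in>U - G. \<theta>)"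
    by (intro sum_mono) (auto simp: G_def)
  also have "\<dots> \<le> real (card U) * \<theta>"
    using assms(1,4) by (simp add: card_mono mult_right_mono)
  finally have sum_G: "(\<Sum>w\<in>U. \<sigma> w) - real (card U) * \<theta> \<le> (\<Sum>w\<in>G. \<sigma> w)"
    using sum.subset_diff[OF \<open>G \<subseteq> U\<close> assms(1), of \<sigma>] by simp
  hence "G \<noteq> {}"
    using assms(2) by auto
  have "real (card G) < g"
    using assms(3) by (simp add: G_def)
  hence "0 < g"
    using of_nat_0_le_iff[of "card G"] by linarith
  then obtain w where "w \<in> G" "((\<Sum>w\<in>U. \<sigma> w) - real (card U) * \<theta>) / g \<le> \<sigma> w"
    using exists_ge_average[OF \<open>finite G\<close> \<open>G \<noteq> {}\<close> sum_G, of g] \<open>real (card G) < g\<close> assms(2)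
    by (meson diff_ge_0_iff_ge less_imp_le)
  thus ?thesis
    using \<open>G \<subseteq> U\<close> by blast
qed

lemma prob_forces_load_ge_prob_hits:
  assumes "P \<subseteq> {..<n} - {d}" "W \<subseteq> {..<n} - {d}"
  shows "measure_pmf.prob (Pi_pmf P dflt r) {\<alpha>. \<exists>w\<in>W. k \<le> hits P w \<alpha>}
           \<le> measure_pmf.prob (Pi_pmf P dflt r) {\<alpha>. forces_load n d P k \<alpha>}"
proof (intro measure_pmf.finite_measure_mono subsetI)
  fix \<alpha> assume "\<alpha> \<in> {\<alpha>. \<exists>w\<in>W. k \<le> hits P w \<alpha>}"
  thus "\<alpha> \<in> {\<alpha>. forces_load n d P k \<alpha>}"
    using assms forces_load_hits[of P n d _ k \<alpha>] finite_subset[OF assms(1)] by auto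
qed simp

lemma spread_nodes_force_load:
  fixes r :: "nat \<Rightarrow> nat pmf" and n d :: nat
  defines "U \<equiv> {..<n} - {d}"
  assumes "P \<subseteq> U" "card P = m"
    and supp: "\<And>a. a \<in> P \<Longrightarrow> set_pmf (r a) \<subseteq> U"
    and spread: "\<And>a w. a \<in> P \<Longrightarrow> pmf (r a) w \<le> \<tau>"
    and "0 \<le> \<tau>" "real (k + 1) * \<tau> \<le> \<theta>" "\<theta> \<le> 1" "0 < g" "0 < \<epsilon>" "\<epsilon> \<le> 1"
    and many: "4 / \<epsilon> \<le> g * ((\<theta> - real (k + 1) * \<tau>) ^ k / fact k * (1 - \<theta>))"
    and few: "2 * real k \<le> (real m - real (card U) * \<theta>) / g" "4 / \<epsilon> \<le> (real m - real (card U) * \<theta>) / g"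
  shows "measure_pmf.prob (Pi_pmf P dflt r) {\<alpha>. forces_load n d P k \<alpha>} \<ge> 1 - \<epsilon>"
proof -
  let ?M = "Pi_pmf P dflt r"
  define \<sigma> where "\<sigma> w = (\<Sum>a\<in>P. pmf (r a) w)" for w
  define G where "G = {w \<in> U. \<theta> \<le> \<sigma> w}"
  have "finite U" "finite P" "finite G"
    using assms(2) by (auto simp: U_def G_def intro: finite_subset)
  have "0 \<le> \<theta>"
    using assms(6,7) by (smt (verit) mult_nonneg_nonneg of_nat_0_le_iff)
  show ?thesis
  proof (cases "g \<le> real (card G)")
    case True
    define LB where "LB = (\<theta> - real (k + 1) * \<tau>) ^ k / fact k * (1 - \<theta>)"
    have "0 < 4 / \<epsilon>"
      using \<open>0 < \<epsilon>\<close> by simp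
    hence "0 < g * LB"
      using many unfolding LB_def by linarith
    hence "g * LB \<le> real (card G) * LB"
      using True \<open>0 < g\<close> by (intro mult_right_mono) (auto simp: zero_less_mult_iff)
    hence \<mu>: "4 / \<epsilon> \<le> real (card G) * LB"
      using many by (simp add: LB_def)
    have "1 - 4 / (real (card G) * LB) \<le> measure_pmf.prob ?M {\<alpha>. \<exists>w\<in>G. k \<le> hits P w \<alpha>}"
      using error_bound_four_div(1)[OF \<open>0 < \<epsilon>\<close> \<open>\<epsilon> \<le> 1\<close> \<mu>]
      by (intro prob_some_hits_ge_second_moment[OF \<open>finite P\<close> \<open>finite G\<close> assms(6) spread assms(7,8)])
        (auto simp: G_def \<sigma>_def LB_def)
    also have "\<dots> \<le> measure_pmf.prob ?M {\<alpha>. forces_load n d P k \<alpha>}"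
      using assms(2) by (intro prob_forces_load_ge_prob_hits) (auto simp: U_def G_def)
    finally show ?thesis
      using error_bound_four_div(2)[OF \<open>0 < \<epsilon>\<close> \<open>\<epsilon> \<le> 1\<close> \<mu>] by linarith
  next
    case False
    have "(\<Sum>w\<in>U. \<sigma> w) = real m"
      using sum_pmf_sum_eq_card[where P = P and r = r, OF \<open>finite U\<close> supp] assms(3)
      by (simp add: \<sigma>_def)
    moreover have "0 < (real m - real (card U) * \<theta>) / g"
      using few(2) \<open>0 < \<epsilon>\<close> by (smt (verit) divide_pos_pos)
    hence "real (card U) * \<theta> < real m"
      using \<open>0 < g\<close> by (simp add: zero_less_divide_iff)
    ultimately obtain w where "w \<in> U" "(real m - real (card U) * \<theta>) / g \<le> \<sigma> w"
      using exists_heavily_hit_target[OF \<open>finite U\<close>, of \<theta> \<sigma> g] False \<open>0 \<le> \<theta>\<close> by (auto simp: G_def)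
    hence "1 - 4 / ((real m - real (card U) * \<theta>) / g) \<le> measure_pmf.prob ?M {\<alpha>. k \<le> hits P w \<alpha>}"
      using few(1) \<open>0 < g\<close> \<open>real (card U) * \<theta> < real m\<close> unfolding \<sigma>_def
      by (intro prob_hits_ge_second_moment \<open>finite P\<close>) auto
    also have "\<dots> \<le> measure_pmf.prob ?M {\<alpha>. forces_load n d P k \<alpha>}"
      using prob_forces_load_ge_prob_hits[of P n d "{w}"] assms(2) \<open>w \<in> U\<close> by (simp add: U_def)
    finally show ?thesis
      using error_bound_four_div(2)[OF \<open>0 < \<epsilon>\<close> \<open>\<epsilon> \<le> 1\<close> few(2)] by linarith
  qed
qed

lemma card_Union_good_pieces_le:
  "(\<And>T. T \<in> \<T> \<Longrightarrow> good_piece h k T) \<Longrightarrow> card (\<Union>\<T>) \<le> 2 * k * card \<T>"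
proof -
  assume "\<And>T. T \<in> \<T> \<Longrightarrow> good_piece h k T"
  hence "(\<Sum>T\<in>\<T>. card T) \<le> (\<Sum>T\<in>\<T>. 2 * k)"
    by (intro sum_mono) (auto simp: good_piece_def)
  thus ?thesis
    using card_Union_le_sum_card[of \<T>] by (simp add: mult.commute)
qed

lemma realized_good_pieces_force_load:
  assumes "\<Union>\<T> \<subseteq> {..<n} - {d}" "h ` \<Union>\<T> \<subseteq> {..<n} - {d}" "\<And>T. T \<in> \<T> \<Longrightarrow> good_piece h k T"
  shows "{\<alpha>. \<exists>T\<in>\<T>. \<forall>v\<in>T. \<alpha> v = h v} \<subseteq> {\<alpha>. forces_load n d (\<Union>\<T>) k \<alpha>}"
proof safe
  fix \<alpha> T assume "T \<in> \<T>" "\<forall>v\<in>T. \<alpha> v = h v"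
  moreover have "h ` T \<subseteq> {..<n} - {d}"
    using assms(2) \<open>T \<in> \<T>\<close> by blast
  ultimately show "forces_load n d (\<Union>\<T>) k \<alpha>"
    using assms(1,3) by (intro forces_load_good_piece[where T = T and h = h]) auto
qed

lemma heavy_nodes_force_load:
  fixes r :: "nat \<Rightarrow> nat pmf" and n d :: nat
  defines "U \<equiv> {..<n} - {d}"
  assumes "H \<subseteq> U"
    and supp: "\<And>v. v \<in> H \<Longrightarrow> set_pmf (r v) \<subseteq> U"
    and heavy: "\<And>v. v \<in> H \<Longrightarrow> \<exists>w. \<tau> < pmf (r v) w"
    and "0 < \<tau>" "1 \<le> k" "0 < \<epsilon>" "\<epsilon> \<le> 1"
    and many: "2 * k * R + k * (card (U - H) + R) + R < card H"
    and "4 / \<epsilon> \<le> real R * \<tau> ^ (2 * k)"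
  shows "\<exists>B\<subseteq>H. card B \<le> 2 * k * R \<and>
           measure_pmf.prob (Pi_pmf B dflt r) {\<alpha>. forces_load n d B k \<alpha>} \<ge> 1 - \<epsilon>"
proof -
  define h where "h v = (SOME w. \<tau> < pmf (r v) w)" for v
  have h: "\<tau> < pmf (r v) (h v)" if "v \<in> H" for v
    unfolding h_def using heavy[OF that] by (rule someI_ex)
  have h_U: "h v \<in> U" if "v \<in> H" for v
    using h[OF that] \<open>0 < \<tau>\<close> supp[OF that] by (auto simp: set_pmf_eq)
  have "finite U" "finite H"
    using assms(2) by (auto simp: U_def intro: finite_subset)
  have "H \<noteq> {}"
    using many by auto
  hence "\<tau> \<le> 1"
    using h pmf_le_1 by (meson ex_in_conv less_le_trans less_imp_le)
  have "card (h ` H - H) \<le> card (U - H)"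
    using h_U \<open>finite U\<close> by (intro card_mono) auto
  hence "2 * k * R + k * (card (h ` H - H) + R) + R < card H"
    using many by (meson add_le_mono1 add_mono_thms_linordered_semiring(2) le_less_trans mult_le_mono2)
  then obtain \<T> where \<T>: "\<T> \<subseteq> Pow H" "disjoint \<T>" "\<forall>T\<in>\<T>. good_piece h k T" "card \<T> = R"
    using disjoint_good_pieces[OF \<open>finite H\<close> assms(6)] by blast
  have "card (\<Union>\<T>) \<le> 2 * k * R"
    using card_Union_good_pieces_le[of \<T> h k] \<T>(3,4) by simp
  moreover have "1 - \<epsilon> \<le> measure_pmf.prob (Pi_pmf (\<Union>\<T>) dflt r) {\<alpha>. \<exists>T\<in>\<T>. \<forall>v\<in>T. \<alpha> v = h v}"
  proof -
    have "1 - 4 / (real R * \<tau> ^ (2 * k))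
            \<le> measure_pmf.prob (Pi_pmf (\<Union>\<T>) dflt r) {\<alpha>. \<exists>T\<in>\<T>. \<forall>v\<in>T. \<alpha> v = h v}"
      using h \<T> \<open>\<tau> \<le> 1\<close> \<open>0 < \<tau>\<close> error_bound_four_div(1)[OF assms(7,8,10)]
      by (intro prob_good_piece_realized_ge[OF \<open>finite H\<close>, where s = "2 * k"])
        (auto simp: good_piece_def less_imp_le)
    thus ?thesis
      using error_bound_four_div(2)[OF assms(7,8,10)] by linarith
  qed
  moreover have "\<Union>\<T> \<subseteq> {..<n} - {d}" "h ` \<Union>\<T> \<subseteq> {..<n} - {d}"
    using \<T>(1) assms(2) h_U by (auto simp: U_def)
  hence "measure_pmf.prob (Pi_pmf (\<Union>\<T>) dflt r) {\<alpha>. \<exists>T\<in>\<T>. \<forall>v\<in>T. \<alpha> v = h v}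
       \<le> measure_pmf.prob (Pi_pmf (\<Union>\<T>) dflt r) {\<alpha>. forces_load n d (\<Union>\<T>) k \<alpha>}"
    using \<T>(3) by (intro measure_pmf.finite_measure_mono realized_good_pieces_force_load) auto
  ultimately show ?thesis
    using \<T>(1) by (intro exI[of _ "\<Union>\<T>"]) auto
qed

lemma exists_small_set_forcing_load:
  fixes r :: "nat \<Rightarrow> nat pmf" and n d :: nat
  defines "U \<equiv> {..<n} - {d}"
  assumes supp: "\<And>v. v \<in> U \<Longrightarrow> set_pmf (r v) \<subseteq> U"
    and "1 \<le> k" "0 < \<tau>" "real (k + 1) * \<tau> \<le> \<theta>" "\<theta> \<le> 1" "0 < g" "0 < \<epsilon>" "\<epsilon> \<le> 1"
    and "4 / \<epsilon> \<le> g * ((\<theta> - real (k + 1) * \<tau>) ^ k / fact k * (1 - \<theta>))"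
    and "2 * real k \<le> (real m - real (card U) * \<theta>) / g" "4 / \<epsilon> \<le> (real m - real (card U) * \<theta>) / g"
    and "4 / \<epsilon> \<le> real R * \<tau> ^ (2 * k)"
    and "2 * k * R + k * (m + R) + R + m \<le> card U" "2 * k * R \<le> m"
  shows "\<exists>B\<subseteq>U. card B \<le> m \<and> measure_pmf.prob (Pi_pmf B d r) {\<alpha>. forces_load n d B k \<alpha>} \<ge> 1 - \<epsilon>"
proof -
  define S where "S = {v \<in> U. \<forall>w. pmf (r v) w \<le> \<tau>}"
  have "finite U" "S \<subseteq> U"
    by (auto simp: U_def S_def)
  show ?thesis
  proof (cases "m \<le> card S")
    case True
    then obtain P where "P \<subseteq> S" "card P = m"
      by (meson obtain_subset_with_card_n)
    moreover from this have "measure_pmf.prob (Pi_pmf P d r) {\<alpha>. forces_load n d P k \<alpha>} \<ge> 1 - \<epsilon>"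
      using assms(2-13) \<open>S \<subseteq> U\<close> unfolding U_def
      by (intro spread_nodes_force_load[where \<theta> = \<theta> and g = g]) (auto simp: S_def U_def)
    ultimately show ?thesis
      using \<open>S \<subseteq> U\<close> by (intro exI[of _ P]) auto
  next
    case False
    have "k * (card S + R) \<le> k * (m + R)"
      using False by simp
    hence "2 * k * R + k * (card S + R) + R < card U - card S"
      using False assms(14) by linarith
    moreover have "card (U - S) = card U - card S" "U - (U - S) = S"
      using \<open>finite U\<close> \<open>S \<subseteq> U\<close> by (auto intro: card_Diff_subset finite_subset)
    ultimately have many: "2 * k * R + k * (card (U - (U - S)) + R) + R < card (U - S)"
      by simp
    have "\<exists>B\<subseteq>U - S. card B \<le> 2 * k * R \<and>
            measure_pmf.prob (Pi_pmf B d r) {\<alpha>. forces_load n d B k \<alpha>} \<ge> 1 - \<epsilon>"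
    proof (rule heavy_nodes_force_load[of "U - S" n d r \<tau> k \<epsilon> R d, folded U_def])
      show "set_pmf (r v) \<subseteq> U" if "v \<in> U - S" for v
        using supp that by blast
      show "\<exists>w. \<tau> < pmf (r v) w" if "v \<in> U - S" for v
        using that by (auto simp: S_def not_le)
    qed (use assms(3,4,8,9,13) many in auto)
    then obtain B where "B \<subseteq> U - S" "card B \<le> 2 * k * R"
      "measure_pmf.prob (Pi_pmf B d r) {\<alpha>. forces_load n d B k \<alpha>} \<ge> 1 - \<epsilon>"
      by blast
    thus ?thesis
      using assms(15) by (intro exI[of _ B]) auto
  qed
qed

section \<open>Choice of the parameters\<close>

lemma parameter_bounds:
  fixes lx L :: real and k :: nat
  defines "\<theta> \<equiv> 1 / (8 * lx)" and "\<tau> \<equiv> 1 / (16 * lx * real (k + 1))" and "\<beta> \<equiv> 1 / (16 * lx * (L + 2))"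
  assumes lx: "1 \<le> lx" and L: "0 \<le> L" and k: "L < real k" "real k \<le> L + 1"
  shows "\<beta> powr (L + 1) / 2 \<le> (\<theta> - real (k + 1) * \<tau>) ^ k / fact k * (1 - \<theta>)"
    and "\<beta> powr (2 * (L + 1)) \<le> \<tau> ^ (2 * k)"
proof -
  have "1 \<le> k"
    using L k(1) by linarith
  have "1 * 1 \<le> (16 * lx) * (L + 2)"
    using lx L by (intro mult_mono) auto
  hence \<beta>: "0 < \<beta>" "\<beta> \<le> 1"
    by (auto simp: \<beta>_def)
  have "\<beta> powr (L + 1) \<le> \<beta> ^ k"
    using \<beta> powr_mono'[of "real k" "L + 1" \<beta>] k(2) by (simp add: powr_realpow)
  also have "\<dots> \<le> (1 / (16 * lx * real k)) ^ k"
    using \<beta> lx k(2) \<open>1 \<le> k\<close> by (intro power_mono) (auto simp: \<beta>_def frac_le)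
  also have "\<dots> = (\<theta> / 2) ^ k / real k ^ k"
    by (simp add: \<theta>_def field_simps)
  also have "\<dots> \<le> (\<theta> / 2) ^ k / fact k"
    using lx \<open>1 \<le> k\<close> fact_le_power[of k] by (intro divide_left_mono) (auto simp: \<theta>_def)
  finally have hit: "\<beta> powr (L + 1) * (1 / 2) \<le> (\<theta> / 2) ^ k / fact k * (1 - \<theta>)"
    using lx by (intro mult_mono) (auto simp: \<theta>_def)
  have "real (k + 1) * \<tau> = 1 / (16 * lx)"
    unfolding \<tau>_def by (simp del: of_nat_Suc)
  hence half: "\<theta> - real (k + 1) * \<tau> = \<theta> / 2"
    by (simp add: \<theta>_def)
  show "\<beta> powr (L + 1) / 2 \<le> (\<theta> - real (k + 1) * \<tau>) ^ k / fact k * (1 - \<theta>)"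
    unfolding half using hit by simp
  have "\<beta> powr (2 * (L + 1)) \<le> \<beta> powr real (2 * k)"
    using \<beta> k(2) by (intro powr_mono') auto
  also have "\<dots> = \<beta> ^ (2 * k)"
    using \<beta>(1) by (rule powr_realpow)
  also have "\<dots> \<le> \<tau> ^ (2 * k)"
    using \<beta> lx k(2) by (intro power_mono) (auto simp: \<beta>_def \<tau>_def frac_le)
  finally show "\<beta> powr (2 * (L + 1)) \<le> \<tau> ^ (2 * k)" .
qed

definition large_enough :: "real \<Rightarrow> bool" where
  "large_enough x \<longleftrightarrow> (let L = 1/10 * (ln x / ln (ln x)); \<beta> = 1 / (16 * ln x * (L + 2)) in
     1 \<le> ln x \<and> 0 \<le> ln (ln x) \<and> 1 \<le> x powr (7/10) \<and>
     4 * x powr (1/20) \<le> sqrt x * \<beta> powr (L + 1) / 2 \<and>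
     2 * (L + 1) \<le> (x / ln x - 1 - x / (8 * ln x)) / sqrt x \<and>
     4 * x powr (1/20) \<le> (x / ln x - 1 - x / (8 * ln x)) / sqrt x \<and>
     4 * x powr (1/20) \<le> (x powr (7/10) - 1) * \<beta> powr (2 * (L + 1)) \<and>
     2 * (L + 1) * x powr (7/10) + (L + 1) * (x / ln x + x powr (7/10)) + x powr (7/10) + x / ln x
       \<le> x - 1 \<and>
     2 * (L + 1) * x powr (7/10) \<le> x / ln x - 1)"

lemma eventually_large_enough: "eventually large_enough at_top"
  unfolding large_enough_def Let_def
  by (intro eventually_conj; real_asymp)

lemma budget_mono:
  fixes k m R :: nat
  assumes "real k \<le> K" "real m \<le> M" "real R \<le> P" "0 \<le> M" "0 \<le> P"
  shows "real (2 * k * R + k * (m + R) + R + m) \<le> 2 * K * P + K * (M + P) + P + M"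
    and "real (2 * k * R) \<le> 2 * K * P"
proof -
  have "real k * real R \<le> K * P" "real k * (real m + real R) \<le> K * (M + P)"
    using assms by (auto intro!: mult_mono)
  thus "real (2 * k * R + k * (m + R) + R + m) \<le> 2 * K * P + K * (M + P) + P + M"
    "real (2 * k * R) \<le> 2 * K * P"
    using assms(2,3) by (simp_all add: algebra_simps)
qed

lemma large_enough_parameters:
  fixes n :: nat
  defines "x \<equiv> real n"
  assumes "large_enough x"
  obtains k m R :: nat and \<tau> \<theta> :: real
  where "1/10 * (ln x / ln (ln x)) < real k" "real m \<le> x / ln x"
    "1 \<le> k" "0 < \<tau>" "real (k + 1) * \<tau> \<le> \<theta>" "\<theta> \<le> 1"
    "4 * x powr (1/20) \<le> sqrt x * ((\<theta> - real (k + 1) * \<tau>) ^ k / fact k * (1 - \<theta>))"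
    "2 * real k \<le> (real m - (x - 1) * \<theta>) / sqrt x"
    "4 * x powr (1/20) \<le> (real m - (x - 1) * \<theta>) / sqrt x"
    "4 * x powr (1/20) \<le> real R * \<tau> ^ (2 * k)"
    "real (2 * k * R + k * (m + R) + R + m) \<le> x - 1" "2 * k * R \<le> m"
proof -
  define L where "L = 1/10 * (ln x / ln (ln x))"
  define \<beta> where "\<beta> = 1 / (16 * ln x * (L + 2))"
  have large: "1 \<le> ln x" "0 \<le> ln (ln x)" "1 \<le> x powr (7/10)"
     "4 * x powr (1/20) \<le> sqrt x * \<beta> powr (L + 1) / 2"
     "2 * (L + 1) \<le> (x / ln x - 1 - x / (8 * ln x)) / sqrt x"
     "4 * x powr (1/20) \<le> (x / ln x - 1 - x / (8 * ln x)) / sqrt x"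
     "4 * x powr (1/20) \<le> (x powr (7/10) - 1) * \<beta> powr (2 * (L + 1))"
     "2 * (L + 1) * x powr (7/10) + (L + 1) * (x / ln x + x powr (7/10)) + x powr (7/10) + x / ln x
        \<le> x - 1"
     "2 * (L + 1) * x powr (7/10) \<le> x / ln x - 1"
    using assms(2) unfolding large_enough_def Let_def L_def[symmetric] \<beta>_def[symmetric] by blast+
  have "0 < x"
    using large(1) by (cases "n = 0") (auto simp: x_def)
  hence "1 \<le> x"
    using large(1) ln_ge_zero_iff[of x] by linarith
  have "0 \<le> L"
    using large(1,2) by (simp add: L_def)
  \<comment> \<open>Spread case: each of sqrt x targets is hit k times with probability about (\<theta>/2)^k/k!.
    Heavy case: R pieces of at most 2k nodes, each followed with probability at least \<tau>^(2k).
    In both cases at most m failed edges suffice.\<close>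
  define k where "k = nat \<lfloor>L\<rfloor> + 1"
  have "real k = of_int \<lfloor>L\<rfloor> + 1"
    using \<open>0 \<le> L\<close> by (simp add: k_def)
  hence k: "L < real k" "real k \<le> L + 1" "1 \<le> k"
    by (linarith, linarith, simp add: k_def)
  define \<theta> where "\<theta> = 1 / (8 * ln x)"
  define \<tau> where "\<tau> = 1 / (16 * ln x * real (k + 1))"
  define m where "m = nat \<lfloor>x / ln x\<rfloor>"
  define R where "R = nat \<lfloor>x powr (7/10)\<rfloor>"
  have "0 \<le> x / ln x"
    using large(1) \<open>1 \<le> x\<close> by simp
  hence m: "x / ln x - 1 \<le> real m" "real m \<le> x / ln x"
    unfolding m_def by linarith+
  have R: "x powr (7/10) - 1 \<le> real R" "real R \<le> x powr (7/10)"
    using large(3) unfolding R_def by linarith+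
  have bounds: "\<beta> powr (L + 1) / 2 \<le> (\<theta> - real (k + 1) * \<tau>) ^ k / fact k * (1 - \<theta>)"
    "\<beta> powr (2 * (L + 1)) \<le> \<tau> ^ (2 * k)"
    using parameter_bounds[OF large(1) \<open>0 \<le> L\<close> k(1,2)] by (simp_all add: \<theta>_def \<tau>_def \<beta>_def)
  have "(k + 1) * \<tau> = \<theta> / 2"
    using large(1) by (simp add: \<theta>_def \<tau>_def del: of_nat_Suc)
  show ?thesis
  proof (rule that[of k m \<tau> \<theta> R])
    show "0 < \<tau>" "\<theta> \<le> 1"
      using large(1) by (simp_all add: \<tau>_def \<theta>_def)
    have "0 < \<theta>"
      using large(1) by (simp add: \<theta>_def)
    thus "real (k + 1) * \<tau> \<le> \<theta>"
      using \<open>(k + 1) * \<tau> = \<theta> / 2\<close> by linarith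
    have "sqrt x * \<beta> powr (L + 1) / 2 \<le> sqrt x * ((\<theta> - real (k + 1) * \<tau>) ^ k / fact k * (1 - \<theta>))"
      using mult_left_mono[OF bounds(1), of "sqrt x"] \<open>0 < x\<close> by simp
    thus "4 * x powr (1/20) \<le> sqrt x * ((\<theta> - real (k + 1) * \<tau>) ^ k / fact k * (1 - \<theta>))"
      using large(4) by linarith
    have "(x - 1) * \<theta> \<le> x / (8 * ln x)"
      using large(1) by (simp add: \<theta>_def divide_right_mono)
    hence \<mu>: "(x / ln x - 1 - x / (8 * ln x)) / sqrt x \<le> (real m - (x - 1) * \<theta>) / sqrt x"
      using m(1) \<open>0 < x\<close> by (intro divide_right_mono) auto
    show "2 * real k \<le> (real m - (x - 1) * \<theta>) / sqrt x"
      by (rule order_trans[OF _ order_trans[OF large(5) \<mu>]]) (use k(2) in simp)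
    show "4 * x powr (1/20) \<le> (real m - (x - 1) * \<theta>) / sqrt x"
      by (rule order_trans[OF large(6) \<mu>])
    have "(x powr (7/10) - 1) * \<beta> powr (2 * (L + 1)) \<le> real R * \<tau> ^ (2 * k)"
      using R(1) bounds(2) large(3) by (intro mult_mono) auto
    thus "4 * x powr (1/20) \<le> real R * \<tau> ^ (2 * k)"
      using large(7) by linarith
    from \<open>0 \<le> x / ln x\<close> have "real (2 * k * R + k * (m + R) + R + m)
        \<le> 2 * (L + 1) * x powr (7/10) + (L + 1) * (x / ln x + x powr (7/10)) + x powr (7/10) + x / ln x"
      "real (2 * k * R) \<le> 2 * (L + 1) * x powr (7/10)"
      using budget_mono[OF k(2) m(2) R(2)] large(3) by simp_all
    thus "real (2 * k * R + k * (m + R) + R + m) \<le> x - 1" "2 * k * R \<le> m"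
      using large(8,9) m(1) by linarith+
  qed (use k m in \<open>auto simp: L_def\<close>)
qed

lemma overload_whp_if_large_enough:
  assumes "large_enough (real n)" "undirected_graph n E" "d < n" "failover_protocol n E D"
  shows "\<exists>F. F \<subseteq> {e \<in> E. d \<in> e} \<and> real (card F) \<le> real n / ln (real n) \<and>
           measure_pmf.prob (routing_entries n D F d)
             {\<alpha>. \<exists>v\<in>{..<n} - {d}. ereal (1/10 * (ln (real n) / ln (ln (real n)))) < load n \<alpha> d v}
           \<ge> 1 - real n powr (- (1/20))"
proof -
  define x where "x = real n"
  define \<epsilon> where "\<epsilon> = x powr (- (1/20))"
  define r where "r v = D v ({d} \<inter> nbrs E v) d" for v
  have "large_enough x"
    using assms(1) by (simp add: x_def)
  then obtain k m R \<tau> \<theta> where k: "1/10 * (ln x / ln (ln x)) < real k" and m: "real m \<le> x / ln x"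
    and params: "1 \<le> k" "0 < \<tau>" "real (k + 1) * \<tau> \<le> \<theta>" "\<theta> \<le> 1"
    "4 * x powr (1/20) \<le> sqrt x * ((\<theta> - real (k + 1) * \<tau>) ^ k / fact k * (1 - \<theta>))"
    "2 * real k \<le> (real m - (x - 1) * \<theta>) / sqrt x"
    "4 * x powr (1/20) \<le> (real m - (x - 1) * \<theta>) / sqrt x"
    "4 * x powr (1/20) \<le> real R * \<tau> ^ (2 * k)"
    "real (2 * k * R + k * (m + R) + R + m) \<le> x - 1" "2 * k * R \<le> m"
    by (rule large_enough_parameters[of n, folded x_def])
  have "1 \<le> x" "real (card ({..<n} - {d})) = x - 1"
    using assms(3) by (auto simp: x_def)
  hence \<epsilon>: "4 / \<epsilon> = 4 * x powr (1/20)" "0 < \<epsilon>" "\<epsilon> \<le> 1"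
    by (auto simp: \<epsilon>_def powr_minus_divide ge_one_powr_ge_zero)
  have "2 * k * R + k * (m + R) + R + m \<le> card ({..<n} - {d})"
    using params(9) \<open>real (card ({..<n} - {d})) = x - 1\<close> by linarith
  moreover have "0 < sqrt x"
    using \<open>1 \<le> x\<close> by simp
  ultimately have "\<exists>B\<subseteq>{..<n} - {d}. card B \<le> m \<and>
      measure_pmf.prob (Pi_pmf B d r) {\<alpha>. forces_load n d B k \<alpha>} \<ge> 1 - \<epsilon>"
    using params(1-8,10) \<epsilon> \<open>real (card ({..<n} - {d})) = x - 1\<close>
    by (intro exists_small_set_forcing_load[where g = "sqrt x" and \<theta> = \<theta> and R = R])
      (simp_all add: r_def set_pmf_rerouted_subset[OF assms(2,4) _ assms(3)])
  then obtain B where B: "B \<subseteq> {..<n} - {d}" "card B \<le> m"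
    "measure_pmf.prob (Pi_pmf B d r) {\<alpha>. forces_load n d B k \<alpha>} \<ge> 1 - \<epsilon>"
    by blast
  show ?thesis
  proof (intro exI conjI)
    show "edges_to E d B \<subseteq> {e \<in> E. d \<in> e}"
      by (rule edges_to_subset)
    have "card (edges_to E d B) \<le> m"
      using B(1,2) card_edges_to_le[of B E d] finite_subset[OF B(1)] by auto
    thus "real (card (edges_to E d B)) \<le> real n / ln (real n)"
      using m unfolding x_def by linarith
    show "measure_pmf.prob (routing_entries n D (edges_to E d B) d)
             {\<alpha>. \<exists>v\<in>{..<n} - {d}. ereal (1/10 * (ln (real n) / ln (ln (real n)))) < load n \<alpha> d v}
           \<ge> 1 - real n powr (- (1/20))"
      using prob_forces_load_le_prob_overload[OF assms(2,4,3) B(1) k[unfolded x_def]] B(3)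
      unfolding r_def \<epsilon>_def x_def by linarith
  qed
qed

theorem mainTheorem1:
  "\<exists>C>0. \<exists>c>0. \<exists>N0. \<forall>n\<ge>N0. \<forall>E d D.
     undirected_graph n E \<longrightarrow> d < n \<longrightarrow> failover_protocol n E D \<longrightarrow>
     (\<exists>F. F \<subseteq> {e \<in> E. d \<in> e} \<and> real (card F) \<le> C * real n / ln (real n) \<and>
          measure_pmf.prob (routing_entries n D F d)
            {\<alpha>. \<exists>v\<in>{..<n} - {d}. ereal (1/10 * (ln (real n) / ln (ln (real n)))) < load n \<alpha> d v}
          \<ge> 1 - real n powr (- c))"
proof -
  have "eventually (\<lambda>n. large_enough (real n)) sequentially"
    by (rule eventually_compose_filterlim[OF eventually_large_enough filterlim_real_sequentially])
  then obtain N0 where "\<And>n. n \<ge> N0 \<Longrightarrow> large_enough (real n)"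
    unfolding eventually_sequentially by blast
  hence "\<exists>N0. \<forall>n\<ge>N0. \<forall>E d D. undirected_graph n E \<longrightarrow> d < n \<longrightarrow> failover_protocol n E D \<longrightarrow>
     (\<exists>F. F \<subseteq> {e \<in> E. d \<in> e} \<and> real (card F) \<le> 1 * real n / ln (real n) \<and>
          measure_pmf.prob (routing_entries n D F d)
            {\<alpha>. \<exists>v\<in>{..<n} - {d}. ereal (1/10 * (ln (real n) / ln (ln (real n)))) < load n \<alpha> d v}
          \<ge> 1 - real n powr (- (1/20)))"
    using overload_whp_if_large_enough by (intro exI[of _ N0]) auto
  moreover have "(0::real) < 1" "(0::real) < 1/20"
    by simp_all
  ultimately show ?thesis
    by blast
qed

end
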